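(* Let $(G,\gamma,b)$ be a $4$-edge-connected RES-graph. Let $v\neq b$ be a vertex joined to $b$ by an edge $e$, and let $h$ be the half-edge of $e$ at $v$. Then for any basis $B$ of $M(G,\gamma,b)$, strictly more than half of the transitions at $v$ that contain $h$ work for $B$.
   Context: Graphs are finite and may have loops and multiple edges. Each edge consists of two half-edges; each half-edge is incident to a vertex, and a loop contributes $2$ to the degree of its vertex. An arc is an ordered pair $(h_1,h_2)$ of half-edges forming an edge; its tail is the vertex of $h_1$ and its head is the vertex of $h_2$. A trail is a sequence of arcs whose edges are pairwise distinct and such that the head of each arc (other than the last) is the tail of the next. Its tail and head are the tail of its first arc and the head of its last arc. A circuit is a trail whose head equals its tail. A circuit-decomposition is a collection of circuits using every edge exactly once. A graph is Eulerian if it is connected and every vertex has even degree. A signature is a function $\gamma:E(G)\to\mathbb{Z}_2$. The weight of a trail is the $\mathbb{Z}_2$-sum of $\gamma$ over its edges, and a trail is zero or non-zero accordingly. An RES-graph is a triple $(G,\gamma,b)$ where $G$ is Eulerian, $\gamma$ is a signature of $G$, and $b\in V(G)$. It is $4$-edge-connected if there is no set $Y\subseteq V(G)\setminus\{b\}$ with $|\delta(Y)|=2$, where $\delta(Y)$ is the set of edges with exactly one end in $Y$. A flooding is a circuit-decomposition of $G$ of size $\deg(b)/2$ in which every circuit has $b$ as its tail and head. A flooding is optimal if it has the maximum number of non-zero circuits among all floodings. For a zero circuit $C$ with tail and head $b$, a representative of $C$ is a pair $(f,\alpha)$ where $f$ is an arc of $C$ and $\alpha\in\{0,1\}$ is the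 weight of the initial subtrail of $C$ ending with $f$. A system of representatives for a flooding $\mathcal{C}$ is a set consisting of exactly one representative for each zero circuit of $\mathcal{C}$. The flooding matroid $M(G,\gamma,b)$ has as ground set all pairs $(f,\alpha)$ with $f$ an arc and $\alpha\in\{0,1\}$. Its bases are the systems of representatives of optimal floodings; the empty set is a basis if some optimal flooding has no zero circuit. A transition at $v$ is a set of two distinct half-edges both incident to $v$. The transitions of a trail $T$ are the sets $\{h_1,h_2\}$ such that $T$ has consecutive arcs of the form $(h_1',h_1),(h_2,h_2')$. The transitions of a flooding are the transitions of its circuits. A transition $R$ works for a basis $B$ if there is an optimal flooding that has $R$ as a transition and has $B$ as a system of representatives. *)

theory Defs
  imports Main
begin

text \<open>H is the finite set of half-edges, V the finite vertex set,
  vert h the vertex a half-edge is incident to, mate h the other half-edge of the same edge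
  (a fixed-point-free involution on H). Loops are edges whose
  two half-edges sit at the same vertex; parallel edges are distinct such sets.\<close>

type_synonym 'h arc = "'h \<times> 'h"

definition is_graph :: "'h set \<Rightarrow> 'v set \<Rightarrow> ('h \<Rightarrow> 'v) \<Rightarrow> ('h \<Rightarrow> 'h) \<Rightarrow> bool" where
  "is_graph H V vert mate \<longleftrightarrow> finite H \<and> finite V \<and>
     (\<forall>h\<in>H. vert h \<in> V \<and> mate h \<in> H \<and> mate h \<noteq> h \<and> mate (mate h) = h)"

definition edges :: "'h set \<Rightarrow> ('h \<Rightarrow> 'h) \<Rightarrow> 'h set set" where
  "edges H mate = (\<lambda>h. {h, mate h}) ` H"

definition deg :: "'h set \<Rightarrow> ('h \<Rightarrow> 'v) \<Rightarrow> 'v \<Rightarrow> nat" where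
  "deg H vert v = card {h\<in>H. vert h = v}"

definition adj :: "'h set \<Rightarrow> ('h \<Rightarrow> 'v) \<Rightarrow> ('h \<Rightarrow> 'h) \<Rightarrow> ('v \<times> 'v) set" where
  "adj H vert mate = {(vert h, vert (mate h)) | h. h \<in> H}"

definition connected_graph :: "'h set \<Rightarrow> 'v set \<Rightarrow> ('h \<Rightarrow> 'v) \<Rightarrow> ('h \<Rightarrow> 'h) \<Rightarrow> bool" where
  "connected_graph H V vert mate \<longleftrightarrow> V \<noteq> {} \<and>
     (\<forall>u\<in>V. \<forall>w\<in>V. (u, w) \<in> (adj H vert mate)\<^sup>*)"

definition eulerian :: "'h set \<Rightarrow> 'v set \<Rightarrow> ('h \<Rightarrow> 'v) \<Rightarrow> ('h \<Rightarrow> 'h) \<Rightarrow> bool" where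
  "eulerian H V vert mate \<longleftrightarrow> is_graph H V vert mate \<and> connected_graph H V vert mate \<and>
     (\<forall>v\<in>V. even (deg H vert v))"

text \<open>A signature is a map from edges to Z_2, encoded as bool (True = 1).
  An RES-graph is (G, gamma, b) with G Eulerian and b a vertex.\<close>

definition res_graph :: "'h set \<Rightarrow> 'v set \<Rightarrow> ('h \<Rightarrow> 'v) \<Rightarrow> ('h \<Rightarrow> 'h) \<Rightarrow> 'v \<Rightarrow> bool" where
  "res_graph H V vert mate b \<longleftrightarrow> eulerian H V vert mate \<and> b \<in> V"

definition cut :: "'h set \<Rightarrow> ('h \<Rightarrow> 'v) \<Rightarrow> ('h \<Rightarrow> 'h) \<Rightarrow> 'v set \<Rightarrow> 'h set set" where
  "cut H vert mate Y = {{h, mate h} | h. h \<in> H \<and> vert h \<in> Y \<and> vert (mate h) \<notin> Y}"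

definition four_edge_connected :: "'h set \<Rightarrow> 'v set \<Rightarrow> ('h \<Rightarrow> 'v) \<Rightarrow> ('h \<Rightarrow> 'h) \<Rightarrow> 'v \<Rightarrow> bool" where
  "four_edge_connected H V vert mate b \<longleftrightarrow>
     \<not> (\<exists>Y. Y \<subseteq> V - {b} \<and> card (cut H vert mate Y) = 2)"

definition is_arc :: "'h set \<Rightarrow> ('h \<Rightarrow> 'h) \<Rightarrow> 'h arc \<Rightarrow> bool" where
  "is_arc H mate a \<longleftrightarrow> fst a \<in> H \<and> snd a = mate (fst a)"

definition arc_edge :: "'h arc \<Rightarrow> 'h set" where
  "arc_edge a = {fst a, snd a}"

definition is_trail :: "'h set \<Rightarrow> ('h \<Rightarrow> 'v) \<Rightarrow> ('h \<Rightarrow> 'h) \<Rightarrow> 'h arc list \<Rightarrow> bool" where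
  "is_trail H vert mate T \<longleftrightarrow> T \<noteq> [] \<and> (\<forall>a\<in>set T. is_arc H mate a) \<and>
     distinct (map arc_edge T) \<and>
     (\<forall>i. Suc i < length T \<longrightarrow> vert (snd (T ! i)) = vert (fst (T ! Suc i)))"

definition weight :: "('h set \<Rightarrow> bool) \<Rightarrow> 'h arc list \<Rightarrow> nat" where
  "weight \<gamma> T = (if odd (card {e \<in> set (map arc_edge T). \<gamma> e}) then 1 else 0)"

definition circuit_at :: "'h set \<Rightarrow> ('h \<Rightarrow> 'v) \<Rightarrow> ('h \<Rightarrow> 'h) \<Rightarrow> 'v \<Rightarrow> 'h arc list \<Rightarrow> bool" where
  "circuit_at H vert mate b T \<longleftrightarrow> is_trail H vert mate T \<and>
     vert (fst (hd T)) = b \<and> vert (snd (last T)) = b"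

definition flooding :: "'h set \<Rightarrow> ('h \<Rightarrow> 'v) \<Rightarrow> ('h \<Rightarrow> 'h) \<Rightarrow> 'v \<Rightarrow> 'h arc list set \<Rightarrow> bool" where
  "flooding H vert mate b C \<longleftrightarrow> finite C \<and>
     (\<forall>T\<in>C. circuit_at H vert mate b T) \<and>
     (\<forall>e\<in>edges H mate. \<exists>!T. T \<in> C \<and> e \<in> set (map arc_edge T)) \<and>
     card C = deg H vert b div 2"

definition nonzero_count :: "('h set \<Rightarrow> bool) \<Rightarrow> 'h arc list set \<Rightarrow> nat" where
  "nonzero_count \<gamma> C = card {T \<in> C. weight \<gamma> T = 1}"

definition optimal_flooding ::
  "'h set \<Rightarrow> ('h \<Rightarrow> 'v) \<Rightarrow> ('h \<Rightarrow> 'h) \<Rightarrow> ('h set \<Rightarrow> bool) \<Rightarrow> 'v \<Rightarrow> 'h arc list set \<Rightarrow> bool" where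
  "optimal_flooding H vert mate \<gamma> b C \<longleftrightarrow> flooding H vert mate b C \<and>
     (\<forall>C'. flooding H vert mate b C' \<longrightarrow> nonzero_count \<gamma> C' \<le> nonzero_count \<gamma> C)"

definition is_rep :: "('h set \<Rightarrow> bool) \<Rightarrow> 'h arc list \<Rightarrow> 'h arc \<times> nat \<Rightarrow> bool" where
  "is_rep \<gamma> T p \<longleftrightarrow> (\<exists>i<length T. fst p = T ! i \<and> snd p = weight \<gamma> (take (Suc i) T))"

definition sys_reps :: "('h set \<Rightarrow> bool) \<Rightarrow> 'h arc list set \<Rightarrow> ('h arc \<times> nat) set \<Rightarrow> bool" where
  "sys_reps \<gamma> C S \<longleftrightarrow> (\<exists>g. (\<forall>T\<in>C. weight \<gamma> T = 0 \<longrightarrow> is_rep \<gamma> T (g T)) \<and>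
       inj_on g {T \<in> C. weight \<gamma> T = 0} \<and>
       S = g ` {T \<in> C. weight \<gamma> T = 0})"

definition flooding_basis ::
  "'h set \<Rightarrow> ('h \<Rightarrow> 'v) \<Rightarrow> ('h \<Rightarrow> 'h) \<Rightarrow> ('h set \<Rightarrow> bool) \<Rightarrow> 'v \<Rightarrow> ('h arc \<times> nat) set \<Rightarrow> bool" where
  "flooding_basis H vert mate \<gamma> b B \<longleftrightarrow>
     (\<exists>C. optimal_flooding H vert mate \<gamma> b C \<and> sys_reps \<gamma> C B)"

definition trail_transitions :: "'h arc list \<Rightarrow> 'h set set" where
  "trail_transitions T = {{snd (T ! i), fst (T ! Suc i)} | i. Suc i < length T}"

definition flooding_transitions :: "'h arc list set \<Rightarrow> 'h set set" where
  "flooding_transitions C = (\<Union>T\<in>C. trail_transitions T)"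

definition works_for ::
  "'h set \<Rightarrow> ('h \<Rightarrow> 'v) \<Rightarrow> ('h \<Rightarrow> 'h) \<Rightarrow> ('h set \<Rightarrow> bool) \<Rightarrow> 'v \<Rightarrow> 'h set \<Rightarrow> ('h arc \<times> nat) set \<Rightarrow> bool" where
  "works_for H vert mate \<gamma> b R B \<longleftrightarrow>
     (\<exists>C. optimal_flooding H vert mate \<gamma> b C \<and> R \<in> flooding_transitions C \<and> sys_reps \<gamma> C B)"

definition transitions_at_with :: "'h set \<Rightarrow> ('h \<Rightarrow> 'v) \<Rightarrow> 'v \<Rightarrow> 'h \<Rightarrow> 'h set set" where
  "transitions_at_with H vert v h =
     {R. \<exists>h1 h2. R = {h1, h2} \<and> h1 \<noteq> h2 \<and> h1 \<in> H \<and> h2 \<in> H \<and> vert h1 = v \<and> vert h2 = v \<and> h \<in> R}"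

end

theory Submission
  imports Defs
begin

(*
  Fix an optimal flooding C with B as system of representatives and let {h, h'} be
  the transition of C containing h. The other half-edges at v come in pairs {x, x'} forming the
  remaining transitions of C at v. For each such pair, cutting the two circuits (or the one
  circuit) at both transitions and reconnecting the four loose ends the other way yields an
  optimal flooding with B still a system of representatives that contains {h, x} or {h, x'};
  the parities of the four pieces decide which reconnection, and where a representative can be
  carried along. When both transitions lie on the same circuit, h is at an end of that circuit
  because its edge goes to b, and 4-edge-connectivity provides a further visit of the closed
  piece between the two transitions to splice it into. Since {h, h'} works as well, more than half
  of the transitions containing h work.
*)

section \<open>Trails as lists of arcs\<close>

definition reverse_trail :: "'h arc list \<Rightarrow> 'h arc list" where
  "reverse_trail T = rev (map prod.swap T)"

definition trail_edges :: "'h arc list \<Rightarrow> 'h set set" where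
  "trail_edges T = set (map arc_edge T)"

text \<open>On trails its parity is the weight; unlike the weight it is additive under append.\<close>
definition gamma_count :: "('h set \<Rightarrow> bool) \<Rightarrow> 'h arc list \<Rightarrow> nat" where
  "gamma_count \<gamma> T = length (filter (\<lambda>a. \<gamma> (arc_edge a)) T)"

definition parity :: "('h set \<Rightarrow> bool) \<Rightarrow> 'h arc list \<Rightarrow> bool" where
  "parity \<gamma> T \<longleftrightarrow> odd (gamma_count \<gamma> T)"

lemma gamma_count_append [simp]: "gamma_count \<gamma> (A @ B) = gamma_count \<gamma> A + gamma_count \<gamma> B"
  by (simp add: gamma_count_def)

lemma arc_edge_swap [simp]: "arc_edge (prod.swap a) = arc_edge a"
  by (cases a) (auto simp: arc_edge_def)

lemma gamma_count_reverse_trail [simp]: "gamma_count \<gamma> (reverse_trail T) = gamma_count \<gamma> T"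
  by (simp add: gamma_count_def reverse_trail_def filter_map comp_def rev_filter[symmetric])

lemma parity_append: "parity \<gamma> (A @ B) \<longleftrightarrow> parity \<gamma> A \<noteq> parity \<gamma> B"
  by (simp add: parity_def)

lemma parity_reverse_trail [simp]: "parity \<gamma> (reverse_trail T) = parity \<gamma> T"
  by (simp add: parity_def)

lemma trail_edges_append [simp]: "trail_edges (A @ B) = trail_edges A \<union> trail_edges B"
  by (simp add: trail_edges_def)

lemma trail_edges_reverse_trail [simp]: "trail_edges (reverse_trail T) = trail_edges T"
  by (simp add: trail_edges_def reverse_trail_def image_image)

lemma map_arc_edge_reverse_trail: "map arc_edge (reverse_trail T) = rev (map arc_edge T)"
  by (simp add: reverse_trail_def rev_map[symmetric] comp_def)

lemma reverse_trail_append [simp]: "reverse_trail (A @ B) = reverse_trail B @ reverse_trail A"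
  by (simp add: reverse_trail_def)

lemma reverse_trail_reverse_trail [simp]: "reverse_trail (reverse_trail A) = A"
  by (simp add: reverse_trail_def rev_map comp_def)

lemma reverse_trail_eq_Nil_iff [simp]: "reverse_trail A = [] \<longleftrightarrow> A = []"
  by (simp add: reverse_trail_def)

lemma length_reverse_trail [simp]: "length (reverse_trail A) = length A"
  by (simp add: reverse_trail_def)

lemma set_reverse_trail: "set (reverse_trail A) = prod.swap ` set A"
  by (simp add: reverse_trail_def)

lemma hd_reverse_trail: "A \<noteq> [] \<Longrightarrow> hd (reverse_trail A) = prod.swap (last A)"
  by (simp add: reverse_trail_def hd_rev last_map)

lemma last_reverse_trail: "A \<noteq> [] \<Longrightarrow> last (reverse_trail A) = prod.swap (hd A)"
  by (simp add: reverse_trail_def last_rev hd_map)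

lemma weight_eq_parity:
  assumes "distinct (map arc_edge T)"
  shows "weight \<gamma> T = (if parity \<gamma> T then 1 else 0)"
proof -
  have "card {e \<in> set (map arc_edge T). \<gamma> e} = length (filter \<gamma> (map arc_edge T))"
    using assms by (metis distinct_card distinct_filter set_filter)
  then show ?thesis by (simp add: weight_def parity_def gamma_count_def filter_map comp_def)
qed

lemma weight_cases: "weight \<gamma> T = 0 \<or> weight \<gamma> T = 1"
  by (simp add: weight_def)

lemma is_rep_iff:
  "is_rep \<gamma> T (f, \<alpha>) \<longleftrightarrow> (\<exists>xs ys. T = xs @ f # ys \<and> \<alpha> = weight \<gamma> (xs @ [f]))"
proof
  assume "is_rep \<gamma> T (f, \<alpha>)"
  then obtain i where i: "i < length T" "f = T ! i" "\<alpha> = weight \<gamma> (take (Suc i) T)"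
    by (auto simp: is_rep_def)
  then have "T = take i T @ f # drop (Suc i) T" by (simp add: id_take_nth_drop)
  moreover have "take (Suc i) T = take i T @ [f]" using i by (simp add: take_Suc_conv_app_nth)
  ultimately show "\<exists>xs ys. T = xs @ f # ys \<and> \<alpha> = weight \<gamma> (xs @ [f])" using i by metis
next
  assume "\<exists>xs ys. T = xs @ f # ys \<and> \<alpha> = weight \<gamma> (xs @ [f])"
  then obtain xs ys where "T = xs @ f # ys" "\<alpha> = weight \<gamma> (xs @ [f])" by blast
  then show "is_rep \<gamma> T (f, \<alpha>)" unfolding is_rep_def
    by (intro exI[of _ "length xs"]) (simp add: nth_append take_Suc_conv_app_nth)
qed

lemma is_rep_transfer:
  assumes rep: "is_rep \<gamma> (A @ K @ B) p" and p: "fst p \<in> set K"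
    and dist: "distinct (map arc_edge (A @ K @ B))" "distinct (map arc_edge (A' @ K @ B'))"
    and parity: "parity \<gamma> A' = parity \<gamma> A"
  shows "is_rep \<gamma> (A' @ K @ B') p"
proof -
  obtain f \<alpha> where f: "p = (f, \<alpha>)" by (cases p)
  obtain K1 K2 where K: "K = K1 @ f # K2" using p split_list by (fastforce simp: f)
  from rep obtain xs ys where xs: "A @ K @ B = xs @ f # ys" "\<alpha> = weight \<gamma> (xs @ [f])"
    unfolding f is_rep_iff by blast
  have dist_arcs: "distinct (A @ K @ B)" "distinct (A' @ K @ B')"
    using dist distinct_map by blast+
  have "(A @ K1) @ f # (K2 @ B) = xs @ f # ys" using xs(1) K by simp
  then have "xs = A @ K1" using dist_arcs(1) K by (subst (asm) append_Cons_eq_iff) auto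
  have "distinct (map arc_edge (A @ K1 @ [f]))" "distinct (map arc_edge (A' @ K1 @ [f]))"
    using dist K by auto
  then have "weight \<gamma> (A @ K1 @ [f]) = weight \<gamma> (A' @ K1 @ [f])"
    using parity by (simp add: weight_eq_parity parity_append)
  then show ?thesis
    unfolding f is_rep_iff using xs \<open>xs = A @ K1\<close> K
    by (intro exI[of _ "A' @ K1"] exI[of _ "K2 @ B'"]) simp
qed

lemma is_trail_iff_successively:
  "is_trail H vert mate T \<longleftrightarrow> T \<noteq> [] \<and> (\<forall>a\<in>set T. is_arc H mate a) \<and>
     distinct (map arc_edge T) \<and> successively (\<lambda>a c. vert (snd a) = vert (fst c)) T"
  by (simp add: is_trail_def successively_conv_nth)

lemma distinct_arc_edges_append_iff:
  "distinct (map arc_edge (A @ B)) \<longleftrightarrow>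
     distinct (map arc_edge A) \<and> distinct (map arc_edge B) \<and> trail_edges A \<inter> trail_edges B = {}"
  by (simp add: trail_edges_def)

lemma is_trail_append:
  assumes "is_trail H vert mate A" "is_trail H vert mate B"
    "vert (snd (last A)) = vert (fst (hd B))" "trail_edges A \<inter> trail_edges B = {}"
  shows "is_trail H vert mate (A @ B)"
  using assms unfolding is_trail_iff_successively distinct_arc_edges_append_iff successively_append_iff
  by auto

lemma is_trail_appendD:
  assumes "is_trail H vert mate (A @ B)" "A \<noteq> []" "B \<noteq> []"
  shows "is_trail H vert mate A" "is_trail H vert mate B"
    "vert (snd (last A)) = vert (fst (hd B))" "trail_edges A \<inter> trail_edges B = {}"
  using assms unfolding is_trail_iff_successively distinct_arc_edges_append_iff successively_append_iff
  by simp_all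

lemma is_trail_distinct: "is_trail H vert mate T \<Longrightarrow> distinct (map arc_edge T)"
  by (simp add: is_trail_def)

lemma is_trail_nonempty: "is_trail H vert mate T \<Longrightarrow> T \<noteq> []"
  by (simp add: is_trail_def)

lemma is_trail_arc: "is_trail H vert mate T \<Longrightarrow> a \<in> set T \<Longrightarrow> is_arc H mate a"
  by (simp add: is_trail_def)

lemma is_trail_consecutive:
  "is_trail H vert mate T \<Longrightarrow> Suc i < length T \<Longrightarrow> vert (snd (T ! i)) = vert (fst (T ! Suc i))"
  by (simp add: is_trail_def)

lemma trail_transitions_append_junction:
  assumes "A \<noteq> []" "B \<noteq> []"
  shows "{snd (last A), fst (hd B)} \<in> trail_transitions (A @ B)"
proof -
  have "(A @ B) ! (length A - 1) = last A" "(A @ B) ! Suc (length A - 1) = hd B"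
    using assms by (simp_all add: nth_append last_conv_nth hd_conv_nth)
  moreover have "Suc (length A - 1) < length (A @ B)" using assms by (cases B) auto
  ultimately show ?thesis unfolding trail_transitions_def by (metis (mono_tags, lifting) CollectI)
qed

lemma trail_transitions_append_left: "trail_transitions B \<subseteq> trail_transitions (A @ B)"
proof
  fix R assume "R \<in> trail_transitions B"
  then obtain i where "R = {snd (B ! i), fst (B ! Suc i)}" "Suc i < length B"
    by (auto simp: trail_transitions_def)
  then show "R \<in> trail_transitions (A @ B)" unfolding trail_transitions_def
    by (intro CollectI exI[of _ "length A + i"]) (simp add: nth_append)
qed

lemma trail_transitions_append_right: "trail_transitions A \<subseteq> trail_transitions (A @ B)"
proof
  fix R assume "R \<in> trail_transitions A"
  then obtain i where "R = {snd (A ! i), fst (A ! Suc i)}" "Suc i < length A"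
    by (auto simp: trail_transitions_def)
  then show "R \<in> trail_transitions (A @ B)" unfolding trail_transitions_def
    by (intro CollectI exI[of _ i]) (simp add: nth_append)
qed

lemma trail_transitions_reverse_trail_subset:
  "trail_transitions (reverse_trail A) \<subseteq> trail_transitions A"
proof
  fix R assume "R \<in> trail_transitions (reverse_trail A)"
  then obtain i where R: "R = {snd (reverse_trail A ! i), fst (reverse_trail A ! Suc i)}"
    and i: "Suc i < length A"
    by (auto simp: trail_transitions_def)
  define j where "j = length A - Suc (Suc i)"
  have "reverse_trail A ! i = prod.swap (A ! Suc j)" "reverse_trail A ! Suc i = prod.swap (A ! j)"
    using i by (simp_all add: reverse_trail_def rev_nth j_def Suc_diff_Suc)
  then have "R = {snd (A ! j), fst (A ! Suc j)}" using R by auto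
  moreover have "Suc j < length A" using i by (simp add: j_def)
  ultimately show "R \<in> trail_transitions A" unfolding trail_transitions_def by blast
qed

lemma trail_transitions_reverse_trail [simp]:
  "trail_transitions (reverse_trail A) = trail_transitions A"
  using trail_transitions_reverse_trail_subset[of A]
    trail_transitions_reverse_trail_subset[of "reverse_trail A"]
  by simp

lemma in_arc_edge_fst: "fst a \<in> arc_edge a"
  by (simp add: arc_edge_def)

lemma in_arc_edge_snd: "snd a \<in> arc_edge a"
  by (simp add: arc_edge_def)

lemma nonzero_count_singleton: "nonzero_count \<gamma> {T} = weight \<gamma> T"
proof -
  have "{S \<in> {T}. weight \<gamma> S = 1} = (if weight \<gamma> T = 1 then {T} else {})" by auto
  then show ?thesis using weight_cases[of \<gamma> T] by (auto simp: nonzero_count_def)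
qed

lemma nonzero_count_doubleton:
  assumes "T \<noteq> T'"
  shows "nonzero_count \<gamma> {T, T'} = weight \<gamma> T + weight \<gamma> T'"
proof -
  have "{S \<in> {T, T'}. weight \<gamma> S = 1} = {S \<in> {T}. weight \<gamma> S = 1} \<union> {S \<in> {T'}. weight \<gamma> S = 1}"
    by auto
  then have "nonzero_count \<gamma> {T, T'} = nonzero_count \<gamma> {T} + nonzero_count \<gamma> {T'}"
    unfolding nonzero_count_def using assms by (simp add: card_Un_disjoint disjoint_iff)
  then show ?thesis by (simp add: nonzero_count_singleton)
qed

definition trail_half_edges_at :: "('h \<Rightarrow> 'v) \<Rightarrow> 'v \<Rightarrow> 'h arc list \<Rightarrow> 'h set" where
  "trail_half_edges_at vert u T = {x. \<exists>a\<in>set T. x \<in> arc_edge a \<and> vert x = u}"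

lemma finite_trail_half_edges_at: "finite (trail_half_edges_at vert u T)"
proof (rule finite_subset)
  show "trail_half_edges_at vert u T \<subseteq> \<Union> (arc_edge ` set T)"
    by (auto simp: trail_half_edges_at_def)
qed (simp add: arc_edge_def)

section \<open>Graphs with half-edges\<close>

locale half_edge_graph =
  fixes H :: "'h set" and V :: "'v set" and vert :: "'h \<Rightarrow> 'v" and mate :: "'h \<Rightarrow> 'h"
  assumes graph: "is_graph H V vert mate"
begin

lemma mate_in: "x \<in> H \<Longrightarrow> mate x \<in> H"
  using graph by (simp add: is_graph_def)

lemma mate_mate [simp]: "x \<in> H \<Longrightarrow> mate (mate x) = x"
  using graph by (simp add: is_graph_def)

lemma mate_neq: "x \<in> H \<Longrightarrow> mate x \<noteq> x"
  using graph by (simp add: is_graph_def)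

lemma vert_in: "x \<in> H \<Longrightarrow> vert x \<in> V"
  using graph by (simp add: is_graph_def)

lemma finite_half_edges: "finite H"
  using graph by (simp add: is_graph_def)

lemma arc_edge_eq_mate: "is_arc H mate a \<Longrightarrow> x \<in> arc_edge a \<Longrightarrow> arc_edge a = {x, mate x}"
  by (auto simp: is_arc_def arc_edge_def)

lemma arc_fst_neq_snd: "is_arc H mate a \<Longrightarrow> fst a \<noteq> snd a"
  using mate_neq[of "fst a"] by (auto simp: is_arc_def)

lemma arc_snd_in: "is_arc H mate a \<Longrightarrow> snd a \<in> H"
  using mate_in by (auto simp: is_arc_def)

lemma is_arc_swap: "is_arc H mate a \<Longrightarrow> is_arc H mate (prod.swap a)"
  by (cases a) (auto simp: is_arc_def mate_in)

lemma arc_edge_in_edges: "is_arc H mate a \<Longrightarrow> arc_edge a \<in> edges H mate"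
  by (auto simp: is_arc_def arc_edge_def edges_def)

lemma is_trail_reverse_trail:
  assumes "is_trail H vert mate A"
  shows "is_trail H vert mate (reverse_trail A)"
proof -
  have "successively (\<lambda>a c. vert (snd a) = vert (fst c)) (reverse_trail A)"
    using assms unfolding is_trail_iff_successively reverse_trail_def successively_rev successively_map
    by (auto elim!: successively_mono)
  then show ?thesis using assms unfolding is_trail_iff_successively
    by (auto simp: map_arc_edge_reverse_trail set_reverse_trail is_arc_swap)
qed

lemma circuit_at_reverse_trail:
  "circuit_at H vert mate b A \<Longrightarrow> circuit_at H vert mate b (reverse_trail A)"
  using is_trail_reverse_trail
  by (auto simp: circuit_at_def hd_reverse_trail last_reverse_trail is_trail_nonempty)

lemma circuit_at_append:
  assumes "is_trail H vert mate A" "is_trail H vert mate B"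
    "vert (fst (hd A)) = b" "vert (snd (last B)) = b"
    "vert (snd (last A)) = vert (fst (hd B))" "trail_edges A \<inter> trail_edges B = {}"
  shows "circuit_at H vert mate b (A @ B)"
  using assms is_trail_append[OF assms(1,2,5,6)] is_trail_nonempty[OF assms(1)]
    is_trail_nonempty[OF assms(2)]
  by (simp add: circuit_at_def)

text \<open>A half-edge determines its edge, and a trail uses each edge once.\<close>
lemma trail_index_unique:
  assumes "is_trail H vert mate T" "i < length T" "j < length T"
    "x \<in> arc_edge (T ! i)" "x \<in> arc_edge (T ! j)"
  shows "i = j"
proof -
  have "is_arc H mate (T ! i)" "is_arc H mate (T ! j)"
    using assms is_trail_arc nth_mem by blast+
  then have "map arc_edge T ! i = map arc_edge T ! j"
    using assms arc_edge_eq_mate by (metis nth_map)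
  then show ?thesis using assms is_trail_distinct nth_eq_iff_index_eq by (metis length_map)
qed

lemma trail_fst_neq_snd:
  assumes "is_trail H vert mate T" "i < length T" "j < length T"
  shows "fst (T ! i) \<noteq> snd (T ! j)"
proof
  assume eq: "fst (T ! i) = snd (T ! j)"
  then have "i = j"
    using trail_index_unique[OF assms] in_arc_edge_fst[of "T ! i"] in_arc_edge_snd[of "T ! j"]
    by simp
  then show False using eq arc_fst_neq_snd is_trail_arc[OF assms(1)] assms(2) by simp
qed

lemma trail_snd_eq_snd_iff:
  assumes "is_trail H vert mate T" "i < length T" "j < length T"
  shows "snd (T ! i) = snd (T ! j) \<longleftrightarrow> i = j"
  using trail_index_unique[OF assms] in_arc_edge_snd by metis

end

section \<open>Floodings\<close>

locale flooded_graph = half_edge_graph H V vert mate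
  for H :: "'h set" and V :: "'v set" and vert :: "'h \<Rightarrow> 'v" and mate :: "'h \<Rightarrow> 'h" +
  fixes b :: 'v and C :: "'h arc list set"
  assumes flooding: "flooding H vert mate b C"
begin

lemma finite_flooding: "finite C"
  using flooding by (simp add: flooding_def)

lemma circuit: "T \<in> C \<Longrightarrow> circuit_at H vert mate b T"
  using flooding by (simp add: flooding_def)

lemma trail: "T \<in> C \<Longrightarrow> is_trail H vert mate T"
  using circuit by (simp add: circuit_at_def)

lemma card_flooding: "card C = deg H vert b div 2"
  using flooding by (simp add: flooding_def)

lemma fst_hd_at_base: "T \<in> C \<Longrightarrow> vert (fst (hd T)) = b"
  using circuit by (simp add: circuit_at_def)

lemma snd_last_at_base: "T \<in> C \<Longrightarrow> vert (snd (last T)) = b"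
  using circuit by (simp add: circuit_at_def)

lemma nonempty: "T \<in> C \<Longrightarrow> T \<noteq> []"
  using trail is_trail_nonempty by blast

lemma is_arc_in: "T \<in> C \<Longrightarrow> a \<in> set T \<Longrightarrow> is_arc H mate a"
  by (rule is_trail_arc[OF trail])

lemma arc_half_edges_in: "T \<in> C \<Longrightarrow> a \<in> set T \<Longrightarrow> fst a \<in> H \<and> snd a \<in> H"
  using is_arc_in[of T a] arc_snd_in[of a] by (simp add: is_arc_def)

lemma edge_covered: "e \<in> edges H mate \<Longrightarrow> \<exists>T\<in>C. e \<in> trail_edges T"
  using flooding unfolding flooding_def trail_edges_def by metis

lemma edge_unique:
  assumes "T \<in> C" "T' \<in> C" "e \<in> trail_edges T" "e \<in> trail_edges T'"
  shows "T = T'"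
proof -
  obtain a where "a \<in> set T" "e = arc_edge a" using assms(3) by (auto simp: trail_edges_def)
  then have "e \<in> edges H mate" using arc_edge_in_edges is_arc_in[OF assms(1)] by blast
  then have "\<exists>!T. T \<in> C \<and> e \<in> set (map arc_edge T)" using flooding by (simp add: flooding_def)
  then show "T = T'" using assms by (auto simp: trail_edges_def)
qed

lemma trail_edges_disjoint:
  "T \<in> C \<Longrightarrow> T' \<in> C \<Longrightarrow> T \<noteq> T' \<Longrightarrow> trail_edges T \<inter> trail_edges T' = {}"
  using edge_unique by blast

lemma half_edge_covered:
  assumes "x \<in> H"
  shows "\<exists>T\<in>C. \<exists>i<length T. x = fst (T ! i) \<or> x = snd (T ! i)"
proof -
  have "{x, mate x} \<in> edges H mate" using assms by (auto simp: edges_def)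
  then obtain T where T: "T \<in> C" "{x, mate x} \<in> trail_edges T" using edge_covered by blast
  then obtain i where i: "i < length T" "arc_edge (T ! i) = {x, mate x}"
    by (auto simp: trail_edges_def in_set_conv_nth)
  then have "x \<in> arc_edge (T ! i)" by simp
  then show ?thesis using T i by (auto simp: arc_edge_def)
qed

lemma arc_position_unique:
  assumes "T \<in> C" "T' \<in> C" "i < length T" "j < length T'"
    "x \<in> arc_edge (T ! i)" "x \<in> arc_edge (T' ! j)"
  shows "T = T' \<and> i = j"
proof -
  have "arc_edge (T ! i) = arc_edge (T' ! j)"
    using assms is_arc_in nth_mem arc_edge_eq_mate by metis
  then have "T = T'" using edge_unique assms by (metis nth_mem trail_edges_def set_map imageI)
  then show ?thesis using trail_index_unique[OF trail[OF assms(1)] assms(3)] assms by simp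
qed

lemma half_edges_at_base:
  "{x \<in> H. vert x = b} = (\<Union>T\<in>C. trail_half_edges_at vert b T)"
proof
  show "{x \<in> H. vert x = b} \<subseteq> (\<Union>T\<in>C. trail_half_edges_at vert b T)"
  proof
    fix x assume "x \<in> {x \<in> H. vert x = b}"
    then obtain T i where "T \<in> C" "i < length T" "x = fst (T ! i) \<or> x = snd (T ! i)" "vert x = b"
      using half_edge_covered by blast
    then have "x \<in> trail_half_edges_at vert b T" "T \<in> C"
      unfolding trail_half_edges_at_def using nth_mem by (auto simp: arc_edge_def)
    then show "x \<in> (\<Union>T\<in>C. trail_half_edges_at vert b T)" by blast
  qed
  show "(\<Union>T\<in>C. trail_half_edges_at vert b T) \<subseteq> {x \<in> H. vert x = b}"
    using arc_half_edges_in by (auto simp: trail_half_edges_at_def arc_edge_def)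
qed

lemma trail_half_edges_at_disjoint:
  assumes "T \<in> C" "T' \<in> C" "T \<noteq> T'"
  shows "trail_half_edges_at vert u T \<inter> trail_half_edges_at vert u T' = {}"
proof -
  have "x \<in> arc_edge a \<Longrightarrow> x \<in> arc_edge a' \<Longrightarrow> a \<in> set T \<Longrightarrow> a' \<in> set T' \<Longrightarrow> False" for x a a'
    using arc_position_unique[OF assms(1,2)] assms(3) by (metis in_set_conv_nth)
  then show ?thesis by (auto simp: trail_half_edges_at_def)
qed

lemma card_trail_half_edges_at_base:
  assumes "T \<in> C"
  shows "2 + (if \<exists>i. Suc i < length T \<and> vert (snd (T ! i)) = b then 1 else 0)
           \<le> card (trail_half_edges_at vert b T)"
proof -
  define n where "n = length T"
  have n: "0 < n" using nonempty[OF assms] by (simp add: n_def)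
  have tr: "is_trail H vert mate T" using trail[OF assms] .
  have mem: "T ! k \<in> set T" if "k < n" for k using that by (simp add: n_def)
  have first: "fst (T ! 0) \<in> trail_half_edges_at vert b T"
    using fst_hd_at_base[OF assms] mem[OF n] nonempty[OF assms]
    by (auto simp: trail_half_edges_at_def hd_conv_nth intro!: bexI[of _ "T ! 0"] in_arc_edge_fst)
  have final: "snd (T ! (n - 1)) \<in> trail_half_edges_at vert b T"
    using snd_last_at_base[OF assms] mem[of "n - 1"] n nonempty[OF assms]
    by (auto simp: trail_half_edges_at_def last_conv_nth n_def
        intro!: bexI[of _ "T ! (n - 1)"] in_arc_edge_snd)
  have ends: "fst (T ! 0) \<noteq> snd (T ! (n - 1))"
    using trail_fst_neq_snd[OF tr] n by (simp add: n_def)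
  show ?thesis
  proof (cases "\<exists>i. Suc i < length T \<and> vert (snd (T ! i)) = b")
    case False
    have "card {fst (T ! 0), snd (T ! (n - 1))} \<le> card (trail_half_edges_at vert b T)"
      using first final finite_trail_half_edges_at by (intro card_mono) auto
    then show ?thesis using ends by (simp add: if_not_P[OF False])
  next
    case True
    then obtain i where i: "Suc i < n" "vert (snd (T ! i)) = b" by (auto simp: n_def)
    have inner: "snd (T ! i) \<in> trail_half_edges_at vert b T"
      using i mem[of i] by (auto simp: trail_half_edges_at_def intro!: in_arc_edge_snd)
    have "snd (T ! i) \<noteq> fst (T ! 0)"
      using trail_fst_neq_snd[OF tr, of 0 i] i n by (simp add: n_def)
    moreover have "snd (T ! i) \<noteq> snd (T ! (n - 1))"
      using trail_snd_eq_snd_iff[OF tr, of i "n - 1"] i by (simp add: n_def)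
    moreover have "card {fst (T ! 0), snd (T ! (n - 1)), snd (T ! i)}
        \<le> card (trail_half_edges_at vert b T)"
      using first final inner finite_trail_half_edges_at by (intro card_mono) auto
    ultimately show ?thesis using ends True by simp
  qed
qed

text \<open>The deg b / 2 circuits of a flooding share out the half-edges at the base, at least two
  each; so none of them can pass through the base.\<close>
lemma inner_vertex_not_base:
  assumes even: "even (deg H vert b)" and T: "T \<in> C" "Suc i < length T"
  shows "vert (snd (T ! i)) \<noteq> b"
proof
  assume inner: "vert (snd (T ! i)) = b"
  have "deg H vert b = (\<Sum>T\<in>C. card (trail_half_edges_at vert b T))"
    unfolding deg_def half_edges_at_base
    by (rule card_UN_disjoint)
      (auto simp: finite_flooding finite_trail_half_edges_at trail_half_edges_at_disjoint)
  also have "\<dots> \<ge> (\<Sum>T'\<in>C. 2 + (if T' = T then 1 else 0))"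
  proof (rule sum_mono)
    fix T' assume "T' \<in> C"
    then show "2 + (if T' = T then 1 else 0) \<le> card (trail_half_edges_at vert b T')"
      using card_trail_half_edges_at_base[of T'] T inner by (auto split: if_splits)
  qed
  also have "(\<Sum>T'\<in>C. 2 + (if T' = T then 1 else 0)) = 2 * card C + (1::nat)"
    using T finite_flooding by (subst sum.distrib) simp
  finally have "deg H vert b \<ge> 2 * card C + 1" .
  then show False using card_flooding even by simp
qed

end

lemma flooding_transitionsI:
  "N \<in> C \<Longrightarrow> R \<in> trail_transitions N \<Longrightarrow> R \<in> flooding_transitions C"
  by (auto simp: flooding_transitions_def)

lemma trail_edges_nonempty: "circuit_at H vert mate b N \<Longrightarrow> trail_edges N \<noteq> {}"
  by (auto simp: circuit_at_def is_trail_def trail_edges_def)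

lemma circuit_at_distinct: "circuit_at H vert mate b N \<Longrightarrow> distinct (map arc_edge N)"
  by (simp add: circuit_at_def is_trail_def)

context half_edge_graph
begin

lemma circuit_half_edge_cases:
  assumes T: "circuit_at H vert mate b T"
    and j: "j < length T" "x = fst (T ! j) \<or> x = snd (T ! j)"
  shows "vert x = b \<or> (\<exists>k. Suc k < length T \<and> (x = snd (T ! k) \<or> x = fst (T ! Suc k)))"
  using j(2)
proof
  assume x: "x = fst (T ! j)"
  show ?thesis
  proof (cases j)
    case 0
    then show ?thesis using x T j by (simp add: circuit_at_def hd_conv_nth)
  next
    case (Suc k)
    then show ?thesis using x j by blast
  qed
next
  assume x: "x = snd (T ! j)"
  show ?thesis
  proof (cases "Suc j < length T")
    case False
    then have "j = length T - 1" "T \<noteq> []" using j by auto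
    then have "T ! j = last T" by (simp add: last_conv_nth)
    then show ?thesis using x T by (simp add: circuit_at_def)
  qed (use x in blast)
qed

end

context flooded_graph
begin

lemma half_edge_in_transition:
  assumes "x \<in> H" "vert x \<noteq> b"
  shows "\<exists>T i. T \<in> C \<and> Suc i < length T \<and> (x = snd (T ! i) \<or> x = fst (T ! Suc i))"
proof -
  obtain T j where "T \<in> C" "j < length T" "x = fst (T ! j) \<or> x = snd (T ! j)"
    using half_edge_covered assms(1) by blast
  then show ?thesis using circuit_half_edge_cases[OF circuit] assms(2) by metis
qed

lemma transition_unique:
  assumes T: "T \<in> C" "Suc i < length T" and T': "T' \<in> C" "Suc j < length T'"
    and x: "x = snd (T ! i) \<or> x = fst (T ! Suc i)" "x = snd (T' ! j) \<or> x = fst (T' ! Suc j)"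
  shows "T = T' \<and> i = j"
proof -
  have fst_snd: "fst (S ! k) \<noteq> snd (S ! l)" if "S \<in> C" "k < length S" "l < length S" for S k l
    using trail_fst_neq_snd[OF trail] that by blast
  have pos: "T = T' \<and> k = l" if "k < length T" "l < length T'"
    "x \<in> arc_edge (T ! k)" "x \<in> arc_edge (T' ! l)" for k l
    using arc_position_unique[OF T(1) T'(1) that] .
  have fst_snd': "fst (T ! k) \<noteq> snd (T ! l)" if "k < length T" "l < length T" for k l
    using fst_snd[OF T(1) that] .
  consider "x = snd (T ! i)" "x = snd (T' ! j)" | "x = snd (T ! i)" "x = fst (T' ! Suc j)"
    | "x = fst (T ! Suc i)" "x = snd (T' ! j)" | "x = fst (T ! Suc i)" "x = fst (T' ! Suc j)"
    using x by blast
  then show ?thesis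
  proof cases
    case 1
    then show ?thesis using pos[of i j] T T' in_arc_edge_snd by (metis Suc_lessD)
  next
    case 2
    then have "T = T' \<and> i = Suc j" using pos[of i "Suc j"] T T' in_arc_edge_snd in_arc_edge_fst
      by (metis Suc_lessD)
    then show ?thesis using 2 fst_snd' T by (metis Suc_lessD)
  next
    case 3
    then have "T = T' \<and> Suc i = j" using pos[of "Suc i" j] T T' in_arc_edge_snd in_arc_edge_fst
      by (metis Suc_lessD)
    then show ?thesis using 3 fst_snd' T by (metis Suc_lessD)
  next
    case 4
    then show ?thesis using pos[of "Suc i" "Suc j"] T T' in_arc_edge_fst by (metis Suc_inject)
  qed
qed

lemma inner_transition:
  assumes T: "T \<in> C" "Suc i < length T"
  shows "snd (T ! i) \<in> H" "fst (T ! Suc i) \<in> H" "snd (T ! i) \<noteq> fst (T ! Suc i)"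
    "vert (snd (T ! i)) = vert (fst (T ! Suc i))"
  using arc_half_edges_in[OF T(1)] trail_fst_neq_snd[OF trail[OF T(1)], of "Suc i" i]
    is_trail_consecutive[OF trail[OF T(1)] T(2)] T(2)
  by auto

lemma replace_disjoint:
  assumes "D \<subseteq> C" "\<forall>N\<in>D'. circuit_at H vert mate b N"
    "(\<Union>N\<in>D'. trail_edges N) = (\<Union>T\<in>D. trail_edges T)"
  shows "(C - D) \<inter> D' = {}"
proof (rule ccontr)
  assume "(C - D) \<inter> D' \<noteq> {}"
  then obtain N where N: "N \<in> C" "N \<notin> D" "N \<in> D'" by blast
  have "trail_edges N \<noteq> {}" using assms(2) N(3) by (metis trail_edges_nonempty)
  then obtain e where e: "e \<in> trail_edges N" by blast
  then obtain T where "T \<in> D" "e \<in> trail_edges T" using assms(3) N by blast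
  then show False using edge_unique assms(1) N e by blast
qed

lemma flooding_replace:
  assumes D: "D \<subseteq> C" and finD': "finite D'" and circ': "\<forall>N\<in>D'. circuit_at H vert mate b N"
    and U: "(\<Union>N\<in>D'. trail_edges N) = (\<Union>T\<in>D. trail_edges T)"
    and dj: "\<forall>N\<in>D'. \<forall>N'\<in>D'. N \<noteq> N' \<longrightarrow> trail_edges N \<inter> trail_edges N' = {}"
    and cd: "card D' = card D"
  shows "flooding H vert mate b ((C - D) \<union> D')"
proof -
  have disj: "(C - D) \<inter> D' = {}" using replace_disjoint D circ' U by blast
  have unique: "\<exists>!T. T \<in> (C - D) \<union> D' \<and> e \<in> trail_edges T" if e: "e \<in> edges H mate" for e
  proof (cases "e \<in> (\<Union>T\<in>D. trail_edges T)")
    case True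
    then obtain N where N: "N \<in> D'" "e \<in> trail_edges N" using U by blast
    obtain T where T: "T \<in> D" "e \<in> trail_edges T" using True by blast
    have "T' = N" if T': "T' \<in> (C - D) \<union> D'" "e \<in> trail_edges T'" for T'
    proof (cases "T' \<in> D'")
      case True
      then show ?thesis using dj N T' by blast
    next
      case False
      then have "T' \<in> C" "T' \<notin> D" using T' by auto
      then show ?thesis using edge_unique[of T' T e] T T' D by blast
    qed
    then show ?thesis using N by blast
  next
    case False
    obtain T where T: "T \<in> C" "e \<in> trail_edges T" using edge_covered e by blast
    have "T' = T" if T': "T' \<in> (C - D) \<union> D'" "e \<in> trail_edges T'" for T'
    proof (cases "T' \<in> D'")
      case True
      then show ?thesis using T' U False by blast
    next
      case False
      then show ?thesis using T' T edge_unique by blast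
    qed
    moreover have "T \<notin> D" using T False by blast
    ultimately show ?thesis using T by blast
  qed
  have "card ((C - D) \<union> D') = card (C - D) + card D'"
    using disj finite_flooding finD' by (simp add: card_Un_disjoint)
  also have "\<dots> = card C"
    using cd D finite_flooding card_Diff_subset[of D C] card_mono[of C D] by (simp add: finite_subset)
  finally show ?thesis
    using unique circuit circ' finite_flooding finD' card_flooding
    by (auto simp: flooding_def trail_edges_def)
qed

lemma nonzero_count_replace:
  assumes "D \<subseteq> C" "finite D'" "(C - D) \<inter> D' = {}"
  shows "nonzero_count \<gamma> ((C - D) \<union> D') + nonzero_count \<gamma> D =
    nonzero_count \<gamma> C + nonzero_count \<gamma> D'"
proof -
  let ?nz = "\<lambda>X. {T \<in> X. weight \<gamma> T = 1}"
  have fin: "finite D" using assms(1) finite_flooding finite_subset by blast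
  have "?nz ((C - D) \<union> D') = ?nz (C - D) \<union> ?nz D'" "?nz C = ?nz (C - D) \<union> ?nz D"
    using assms(1) by blast+
  moreover have "card (?nz (C - D) \<union> ?nz D') = card (?nz (C - D)) + card (?nz D')"
    "card (?nz (C - D) \<union> ?nz D) = card (?nz (C - D)) + card (?nz D)"
    using assms finite_flooding fin by (auto intro: card_Un_disjoint)
  ultimately show ?thesis by (simp add: nonzero_count_def)
qed

lemma replace_two:
  assumes T: "T1 \<in> C" "T2 \<in> C" "T1 \<noteq> T2"
    and N: "circuit_at H vert mate b N1" "circuit_at H vert mate b N2"
    and E: "trail_edges N1 \<union> trail_edges N2 = trail_edges T1 \<union> trail_edges T2"
      "trail_edges N1 \<inter> trail_edges N2 = {}"
  shows "flooding H vert mate b ((C - {T1, T2}) \<union> {N1, N2})"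
    "nonzero_count \<gamma> ((C - {T1, T2}) \<union> {N1, N2}) + weight \<gamma> T1 + weight \<gamma> T2 =
      nonzero_count \<gamma> C + weight \<gamma> N1 + weight \<gamma> N2"
    "N1 \<noteq> N2"
proof -
  have D: "{T1, T2} \<subseteq> C" using T by simp
  show NN: "N1 \<noteq> N2" using E(2) trail_edges_nonempty[OF N(1)] by auto
  show "flooding H vert mate b ((C - {T1, T2}) \<union> {N1, N2})"
    by (rule flooding_replace[OF D]) (use N E NN T in \<open>auto simp: Int_commute\<close>)
  have "(C - {T1, T2}) \<inter> {N1, N2} = {}" by (rule replace_disjoint[OF D]) (use N E in auto)
  from nonzero_count_replace[OF D _ this, of \<gamma>]
  show "nonzero_count \<gamma> ((C - {T1, T2}) \<union> {N1, N2}) + weight \<gamma> T1 + weight \<gamma> T2 =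
      nonzero_count \<gamma> C + weight \<gamma> N1 + weight \<gamma> N2"
    using NN T(3) by (simp add: nonzero_count_doubleton)
qed

lemma sys_reps_replace:
  assumes D: "D \<subseteq> C" and disj: "(C - D) \<inter> D' = {}"
    and g: "\<forall>T\<in>C. weight \<gamma> T = 0 \<longrightarrow> is_rep \<gamma> T (g T)" "inj_on g {T \<in> C. weight \<gamma> T = 0}"
    and \<rho>: "\<forall>N\<in>D'. weight \<gamma> N = 0 \<longrightarrow> is_rep \<gamma> N (\<rho> N)" "inj_on \<rho> {N \<in> D'. weight \<gamma> N = 0}"
      "\<rho> ` {N \<in> D'. weight \<gamma> N = 0} = g ` {T \<in> D. weight \<gamma> T = 0}"
  shows "sys_reps \<gamma> ((C - D) \<union> D') (g ` {T \<in> C. weight \<gamma> T = 0})"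
proof -
  define g' where "g' T = (if T \<in> D' then \<rho> T else g T)" for T
  let ?Z = "\<lambda>X. {T \<in> X. weight \<gamma> T = 0}"
  have Z: "?Z ((C - D) \<union> D') = ?Z (C - D) \<union> ?Z D'" "?Z C = ?Z (C - D) \<union> ?Z D"
    using D by blast+
  have "g' ` ?Z (C - D) = g ` ?Z (C - D)"
    using disj by (auto simp: g'_def intro!: image_cong)
  moreover have "g' ` ?Z D' = \<rho> ` ?Z D'"
    by (auto simp: g'_def intro!: image_cong)
  ultimately have image: "g' ` ?Z ((C - D) \<union> D') = g ` ?Z C"
    unfolding Z image_Un using \<rho>(3) by simp
  have g_outside: "g x \<notin> g ` ?Z D" if "x \<in> ?Z (C - D)" for x
    using that g(2) D by (auto simp: inj_on_def)
  have inj: "inj_on g' (?Z ((C - D) \<union> D'))"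
  proof (rule inj_onI)
    fix x y assume x: "x \<in> ?Z ((C - D) \<union> D')" and y: "y \<in> ?Z ((C - D) \<union> D')"
      and eq: "g' x = g' y"
    consider "x \<in> D'" "y \<in> D'" | "x \<notin> D'" "y \<notin> D'" | "x \<in> D'" "y \<notin> D'" | "x \<notin> D'" "y \<in> D'"
      by blast
    then show "x = y"
    proof cases
      case 1
      then show ?thesis using eq x y \<rho>(2) by (auto simp: g'_def inj_on_def)
    next
      case 2
      then show ?thesis using eq x y g(2) by (auto simp: g'_def inj_on_def)
    next
      case 3
      then have "g y \<in> g ` ?Z D" using eq x \<rho>(3) by (force simp: g'_def)
      then show ?thesis using g_outside y 3 by blast
    next
      case 4
      then have "g x \<in> g ` ?Z D" using eq y \<rho>(3) by (force simp: g'_def)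
      then show ?thesis using g_outside x 4 by blast
    qed
  qed
  have "\<forall>T\<in>(C - D) \<union> D'. weight \<gamma> T = 0 \<longrightarrow> is_rep \<gamma> T (g' T)"
    using g(1) \<rho>(1) by (auto simp: g'_def)
  then show ?thesis unfolding sys_reps_def using inj image by blast
qed

end

lemma weight_circuit:
  "circuit_at H vert mate b N \<Longrightarrow> weight \<gamma> N = (if parity \<gamma> N then 1 else 0)"
  by (rule weight_eq_parity[OF circuit_at_distinct])

section \<open>Optimal floodings with a fixed basis\<close>

locale optimal_basis = flooded_graph H V vert mate b C
  for H :: "'h set" and V :: "'v set" and vert mate b C +
  fixes \<gamma> :: "'h set \<Rightarrow> bool" and g :: "'h arc list \<Rightarrow> 'h arc \<times> nat"
    and B :: "('h arc \<times> nat) set"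
  assumes optimal: "optimal_flooding H vert mate \<gamma> b C"
    and reps: "\<forall>T\<in>C. weight \<gamma> T = 0 \<longrightarrow> is_rep \<gamma> T (g T)"
    and inj_reps: "inj_on g {T \<in> C. weight \<gamma> T = 0}"
    and basis: "B = g ` {T \<in> C. weight \<gamma> T = 0}"
begin

definition basis_flooding :: "'h arc list set \<Rightarrow> bool" where
  "basis_flooding C' \<longleftrightarrow> optimal_flooding H vert mate \<gamma> b C' \<and> sys_reps \<gamma> C' B"

lemma basis_flooding_self: "basis_flooding C"
  unfolding basis_flooding_def sys_reps_def using optimal reps inj_reps basis by blast

lemma works_forI:
  "basis_flooding C' \<Longrightarrow> R \<in> flooding_transitions C' \<Longrightarrow> works_for H vert mate \<gamma> b R B"
  by (auto simp: works_for_def basis_flooding_def)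

lemma rep_mem: "T \<in> C \<Longrightarrow> weight \<gamma> T = 0 \<Longrightarrow> fst (g T) \<in> set T"
  using reps by (auto simp: is_rep_def)

lemma weight_replace_two_le:
  assumes T: "T1 \<in> C" "T2 \<in> C" "T1 \<noteq> T2"
    and N: "circuit_at H vert mate b N1" "circuit_at H vert mate b N2"
    and E: "trail_edges N1 \<union> trail_edges N2 = trail_edges T1 \<union> trail_edges T2"
      "trail_edges N1 \<inter> trail_edges N2 = {}"
  shows "weight \<gamma> N1 + weight \<gamma> N2 \<le> weight \<gamma> T1 + weight \<gamma> T2"
  using replace_two(1,3)[OF T N E] replace_two(2)[OF T N E, of \<gamma>] optimal
  by (auto simp: optimal_flooding_def)

lemma basis_flooding_replace_one:
  assumes T: "T \<in> C" and N: "circuit_at H vert mate b N" "trail_edges N = trail_edges T"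
    and w: "weight \<gamma> N = weight \<gamma> T" and rep: "weight \<gamma> T = 0 \<Longrightarrow> is_rep \<gamma> N (g T)"
  shows "basis_flooding ((C - {T}) \<union> {N})"
proof -
  have D: "{T} \<subseteq> C" using T by simp
  have "flooding H vert mate b ((C - {T}) \<union> {N})"
    by (rule flooding_replace[OF D]) (use N in auto)
  moreover have disj: "(C - {T}) \<inter> {N} = {}" by (rule replace_disjoint[OF D]) (use N in auto)
  moreover have "nonzero_count \<gamma> ((C - {T}) \<union> {N}) = nonzero_count \<gamma> C"
    using nonzero_count_replace[OF D _ disj, of \<gamma>] w by (simp add: nonzero_count_singleton)
  ultimately have "optimal_flooding H vert mate \<gamma> b ((C - {T}) \<union> {N})"
    using optimal by (simp add: optimal_flooding_def)
  moreover have "sys_reps \<gamma> ((C - {T}) \<union> {N}) B" unfolding basis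
    by (rule sys_reps_replace[OF D disj reps inj_reps, of "\<lambda>_. g T"])
      (use rep w in \<open>auto simp: inj_on_def\<close>)
  ultimately show ?thesis by (simp add: basis_flooding_def)
qed

lemma basis_flooding_replace_two:
  assumes T: "T1 \<in> C" "T2 \<in> C" "T1 \<noteq> T2"
    and N: "circuit_at H vert mate b N1" "circuit_at H vert mate b N2"
    and E: "trail_edges N1 \<union> trail_edges N2 = trail_edges T1 \<union> trail_edges T2"
      "trail_edges N1 \<inter> trail_edges N2 = {}"
    and L: "La \<in> {N1, N2}" "Lb \<in> {N1, N2}"
    and rep1: "weight \<gamma> T1 = 0 \<Longrightarrow> weight \<gamma> La = 0 \<and> is_rep \<gamma> La (g T1)"
    and rep2: "weight \<gamma> T2 = 0 \<Longrightarrow> weight \<gamma> Lb = 0 \<and> is_rep \<gamma> Lb (g T2)"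
    and distinct: "weight \<gamma> T1 = 0 \<Longrightarrow> weight \<gamma> T2 = 0 \<Longrightarrow> La \<noteq> Lb"
    and w: "weight \<gamma> N1 + weight \<gamma> N2 = weight \<gamma> T1 + weight \<gamma> T2"
  shows "basis_flooding ((C - {T1, T2}) \<union> {N1, N2})"
proof -
  have D: "{T1, T2} \<subseteq> C" using T by simp
  note replace = replace_two(1)[OF T N E] replace_two(2)[OF T N E, of \<gamma>]
    replace_two(3)[OF T N E]
  have "nonzero_count \<gamma> ((C - {T1, T2}) \<union> {N1, N2}) = nonzero_count \<gamma> C"
    using replace(2) w by simp
  then have "optimal_flooding H vert mate \<gamma> b ((C - {T1, T2}) \<union> {N1, N2})"
    using replace(1) optimal by (simp add: optimal_flooding_def)
  moreover have disj: "(C - {T1, T2}) \<inter> {N1, N2} = {}"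
    by (rule replace_disjoint[OF D]) (use N E in auto)
  define \<rho> where "\<rho> N = (if weight \<gamma> T1 = 0 \<and> N = La then g T1 else g T2)" for N
  have distinct_reps: "g T1 \<noteq> g T2" if "weight \<gamma> T1 = 0" "weight \<gamma> T2 = 0"
    using inj_reps T that by (auto simp: inj_on_def)
  note weights = weight_cases[of \<gamma> T1] weight_cases[of \<gamma> T2] weight_cases[of \<gamma> N1]
    weight_cases[of \<gamma> N2]
  have "sys_reps \<gamma> ((C - {T1, T2}) \<union> {N1, N2}) B" unfolding basis
  proof (rule sys_reps_replace[OF D disj reps inj_reps, of \<rho>])
    show "\<forall>N\<in>{N1, N2}. weight \<gamma> N = 0 \<longrightarrow> is_rep \<gamma> N (\<rho> N)"
      using rep1 rep2 distinct w L weights by (auto simp: \<rho>_def)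
    show "inj_on \<rho> {N \<in> {N1, N2}. weight \<gamma> N = 0}"
      using rep1 rep2 distinct w L replace(3) weights distinct_reps
      by (auto simp: \<rho>_def inj_on_def)
    show "\<rho> ` {N \<in> {N1, N2}. weight \<gamma> N = 0} = g ` {T \<in> {T1, T2}. weight \<gamma> T = 0}"
      using rep1 rep2 distinct w L replace(3) T(3) weights by (auto simp: \<rho>_def)
  qed
  ultimately show ?thesis by (simp add: basis_flooding_def)
qed

end

section \<open>Transitions on two different circuits\<close>

lemma distinct_of_disjoint_trail_edges:
  "trail_edges A \<inter> trail_edges B = {} \<Longrightarrow> A \<noteq> [] \<Longrightarrow> A \<noteq> B"
  by (cases A) (auto simp: trail_edges_def)

lemma weight_circuit_append:
  "circuit_at H vert mate b (A @ B) \<Longrightarrow>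
     weight \<gamma> (A @ B) = (if parity \<gamma> A = parity \<gamma> B then 0 else 1)"
  by (simp add: weight_circuit parity_append)

context optimal_basis
begin

text \<open>Here x y and z w are two transitions at a common vertex; the other two ways of pairing
  up these four half-edges are considered.\<close>
definition regluing_works :: "'h \<Rightarrow> 'h \<Rightarrow> 'h \<Rightarrow> 'h \<Rightarrow> bool" where
  "regluing_works x y z w \<longleftrightarrow> (\<exists>C'. basis_flooding C' \<and>
     ({x, w} \<in> flooding_transitions C' \<and> {z, y} \<in> flooding_transitions C' \<or>
      {x, z} \<in> flooding_transitions C' \<and> {w, y} \<in> flooding_transitions C'))"

lemma regluing_works_sym: "regluing_works x y z w \<longleftrightarrow> regluing_works z w x y"
  unfolding regluing_works_def by (metis insert_commute)

end

text \<open>The straight regluings are X @ W and Z @ Y, the crossed ones join X to the reversal of Z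
  and the reversal of W to Y (or the reversals of these circuits).\<close>
locale crossing = optimal_basis H V vert mate b C \<gamma> g B
  for H :: "'h set" and V :: "'v set" and vert mate b C \<gamma> g B +
  fixes S T X Y Z W :: "'h arc list"
  assumes S: "S \<in> C" "S = X @ Y" "X \<noteq> []" "Y \<noteq> []"
    and T: "T \<in> C" "T = Z @ W" "Z \<noteq> []" "W \<noteq> []"
    and distinct_circuits: "S \<noteq> T"
    and same_vertex: "vert (snd (last Z)) = vert (snd (last X))"
begin

lemma pieces:
  "is_trail H vert mate X" "is_trail H vert mate Y" "is_trail H vert mate Z" "is_trail H vert mate W"
  "vert (snd (last X)) = vert (fst (hd Y))" "vert (snd (last Z)) = vert (fst (hd W))"
  "trail_edges X \<inter> trail_edges Y = {}" "trail_edges Z \<inter> trail_edges W = {}"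
  using is_trail_appendD[OF _ S(3,4)] is_trail_appendD[OF _ T(3,4)] trail[OF S(1)] trail[OF T(1)] S T
  by simp_all

lemma pieces_disjoint: "trail_edges S \<inter> trail_edges T = {}"
  using trail_edges_disjoint S(1) T(1) distinct_circuits by blast

lemma ends_at_base:
  "vert (fst (hd X)) = b" "vert (snd (last Y)) = b" "vert (fst (hd Z)) = b" "vert (snd (last W)) = b"
  using fst_hd_at_base[OF S(1)] snd_last_at_base[OF S(1)] fst_hd_at_base[OF T(1)]
    snd_last_at_base[OF T(1)] S T
  by simp_all

lemma reversed_ends:
  "fst (hd (reverse_trail Z)) = snd (last Z)" "snd (last (reverse_trail W)) = fst (hd W)"
  "snd (last (reverse_trail Z)) = fst (hd Z)" "fst (hd (reverse_trail W)) = snd (last W)"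
  using S T by (simp_all add: hd_reverse_trail last_reverse_trail)

lemma straight_circuits:
  "circuit_at H vert mate b (X @ W)" "circuit_at H vert mate b (Z @ Y)"
  using pieces pieces_disjoint ends_at_base same_vertex S T
  by (auto intro!: circuit_at_append)

lemma crossed_circuits:
  "circuit_at H vert mate b (X @ reverse_trail Z)" "circuit_at H vert mate b (reverse_trail W @ Y)"
  "circuit_at H vert mate b (Z @ reverse_trail X)" "circuit_at H vert mate b (reverse_trail Y @ W)"
proof -
  show XZ: "circuit_at H vert mate b (X @ reverse_trail Z)"
    using pieces pieces_disjoint ends_at_base reversed_ends same_vertex S T
    by (auto intro!: circuit_at_append is_trail_reverse_trail)
  show WY: "circuit_at H vert mate b (reverse_trail W @ Y)"
    using pieces pieces_disjoint ends_at_base reversed_ends same_vertex S T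
    by (auto intro!: circuit_at_append is_trail_reverse_trail)
  show "circuit_at H vert mate b (Z @ reverse_trail X)"
    using circuit_at_reverse_trail[OF XZ] by simp
  show "circuit_at H vert mate b (reverse_trail Y @ W)"
    using circuit_at_reverse_trail[OF WY] by simp
qed

lemma weights:
  "weight \<gamma> S = (if parity \<gamma> X = parity \<gamma> Y then 0 else 1)"
  "weight \<gamma> T = (if parity \<gamma> Z = parity \<gamma> W then 0 else 1)"
  "weight \<gamma> (X @ W) = (if parity \<gamma> X = parity \<gamma> W then 0 else 1)"
  "weight \<gamma> (Z @ Y) = (if parity \<gamma> Z = parity \<gamma> Y then 0 else 1)"
  "weight \<gamma> (X @ reverse_trail Z) = (if parity \<gamma> X = parity \<gamma> Z then 0 else 1)"
  "weight \<gamma> (reverse_trail W @ Y) = (if parity \<gamma> W = parity \<gamma> Y then 0 else 1)"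
  "weight \<gamma> (Z @ reverse_trail X) = (if parity \<gamma> Z = parity \<gamma> X then 0 else 1)"
  "weight \<gamma> (reverse_trail Y @ W) = (if parity \<gamma> Y = parity \<gamma> W then 0 else 1)"
  using weight_circuit_append[OF circuit[OF S(1)[unfolded S(2)]]]
    weight_circuit_append[OF circuit[OF T(1)[unfolded T(2)]]]
    straight_circuits[THEN weight_circuit_append] crossed_circuits[THEN weight_circuit_append]
    S(2) T(2)
  by simp_all

lemma distinct_arc_edges:
  "distinct (map arc_edge S)" "distinct (map arc_edge T)"
  using trail S(1) T(1) is_trail_distinct by blast+

lemma rep_prefix_S:
  assumes "weight \<gamma> S = 0" "fst (g S) \<in> set X" "distinct (map arc_edge (X @ R))"
  shows "is_rep \<gamma> (X @ R) (g S)"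
  using is_rep_transfer[of \<gamma> "[]" X Y "g S" "[]" R] reps S assms distinct_arc_edges by simp

lemma rep_suffix_S:
  assumes "weight \<gamma> S = 0" "fst (g S) \<notin> set X" "distinct (map arc_edge (P @ Y))"
    "parity \<gamma> P = parity \<gamma> X"
  shows "is_rep \<gamma> (P @ Y) (g S)"
  using is_rep_transfer[of \<gamma> X Y "[]" "g S" P "[]"] reps S assms distinct_arc_edges rep_mem[of S]
  by simp

lemma rep_prefix_T:
  assumes "weight \<gamma> T = 0" "fst (g T) \<in> set Z" "distinct (map arc_edge (Z @ R))"
  shows "is_rep \<gamma> (Z @ R) (g T)"
  using is_rep_transfer[of \<gamma> "[]" Z W "g T" "[]" R] reps T assms distinct_arc_edges by simp

lemma rep_suffix_T:
  assumes "weight \<gamma> T = 0" "fst (g T) \<notin> set Z" "distinct (map arc_edge (P @ W))"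
    "parity \<gamma> P = parity \<gamma> Z"
  shows "is_rep \<gamma> (P @ W) (g T)"
  using is_rep_transfer[of \<gamma> Z W "[]" "g T" P "[]"] reps T assms distinct_arc_edges rep_mem[of T]
  by simp

lemma regluing_works_straight:
  assumes L: "La \<in> {X @ W, Z @ Y}" "Lb \<in> {X @ W, Z @ Y}"
    and rep: "weight \<gamma> S = 0 \<Longrightarrow> weight \<gamma> La = 0 \<and> is_rep \<gamma> La (g S)"
      "weight \<gamma> T = 0 \<Longrightarrow> weight \<gamma> Lb = 0 \<and> is_rep \<gamma> Lb (g T)"
    and distinct: "weight \<gamma> S = 0 \<Longrightarrow> weight \<gamma> T = 0 \<Longrightarrow> La \<noteq> Lb"
    and w: "weight \<gamma> (X @ W) + weight \<gamma> (Z @ Y) = weight \<gamma> S + weight \<gamma> T"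
  shows "regluing_works (snd (last X)) (fst (hd Y)) (snd (last Z)) (fst (hd W))"
proof -
  have "basis_flooding ((C - {S, T}) \<union> {X @ W, Z @ Y})"
  proof (rule basis_flooding_replace_two[OF S(1) T(1) distinct_circuits straight_circuits
        _ _ L rep distinct w])
    show "trail_edges (X @ W) \<union> trail_edges (Z @ Y) = trail_edges S \<union> trail_edges T"
      "trail_edges (X @ W) \<inter> trail_edges (Z @ Y) = {}"
      using pieces pieces_disjoint S(2) T(2) by auto
  qed
  moreover have "{snd (last X), fst (hd W)} \<in> trail_transitions (X @ W)"
    "{snd (last Z), fst (hd Y)} \<in> trail_transitions (Z @ Y)"
    using trail_transitions_append_junction S T by simp_all
  ultimately show ?thesis unfolding regluing_works_def by (blast intro: flooding_transitionsI)
qed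

lemma regluing_works_crossed:
  assumes N: "N1 \<in> {X @ reverse_trail Z, Z @ reverse_trail X}"
      "N2 \<in> {reverse_trail W @ Y, reverse_trail Y @ W}"
    and L: "La \<in> {N1, N2}" "Lb \<in> {N1, N2}"
    and rep: "weight \<gamma> S = 0 \<Longrightarrow> weight \<gamma> La = 0 \<and> is_rep \<gamma> La (g S)"
      "weight \<gamma> T = 0 \<Longrightarrow> weight \<gamma> Lb = 0 \<and> is_rep \<gamma> Lb (g T)"
    and distinct: "weight \<gamma> S = 0 \<Longrightarrow> weight \<gamma> T = 0 \<Longrightarrow> La \<noteq> Lb"
    and w: "weight \<gamma> N1 + weight \<gamma> N2 = weight \<gamma> S + weight \<gamma> T"
  shows "regluing_works (snd (last X)) (fst (hd Y)) (snd (last Z)) (fst (hd W))"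
proof -
  have circuits: "circuit_at H vert mate b N1" "circuit_at H vert mate b N2"
    using N crossed_circuits by auto
  have edges: "trail_edges N1 = trail_edges X \<union> trail_edges Z"
    "trail_edges N2 = trail_edges W \<union> trail_edges Y"
    using N by auto
  have "basis_flooding ((C - {S, T}) \<union> {N1, N2})"
  proof (rule basis_flooding_replace_two[OF S(1) T(1) distinct_circuits circuits
        _ _ L rep distinct w])
    show "trail_edges N1 \<union> trail_edges N2 = trail_edges S \<union> trail_edges T"
      "trail_edges N1 \<inter> trail_edges N2 = {}"
      using pieces pieces_disjoint S(2) T(2) edges by auto
  qed
  moreover have "{snd (last X), snd (last Z)} \<in> trail_transitions (X @ reverse_trail Z)"
    "{fst (hd W), fst (hd Y)} \<in> trail_transitions (reverse_trail W @ Y)"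
    using trail_transitions_append_junction[of X "reverse_trail Z"]
      trail_transitions_append_junction[of "reverse_trail W" Y] reversed_ends S T
    by simp_all
  then have "{snd (last X), snd (last Z)} \<in> trail_transitions N1"
    "{fst (hd W), fst (hd Y)} \<in> trail_transitions N2"
    using N trail_transitions_reverse_trail[of "X @ reverse_trail Z"]
      trail_transitions_reverse_trail[of "reverse_trail W @ Y"]
    by auto
  ultimately show ?thesis unfolding regluing_works_def by (blast intro: flooding_transitionsI)
qed

lemma straight_distinct: "X @ W \<noteq> Z @ Y"
  using distinct_of_disjoint_trail_edges[of "X @ W" "Z @ Y"] pieces pieces_disjoint S T by auto

lemma crossed_distinct:
  "X @ reverse_trail Z \<noteq> reverse_trail Y @ W" "Z @ reverse_trail X \<noteq> reverse_trail W @ Y"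
  using distinct_of_disjoint_trail_edges[of "X @ reverse_trail Z" "reverse_trail Y @ W"]
    distinct_of_disjoint_trail_edges[of "Z @ reverse_trail X" "reverse_trail W @ Y"]
    pieces pieces_disjoint S T
  by auto

lemma regluing_works_nonzero_nonzero:
  assumes "weight \<gamma> S = 1" "weight \<gamma> T = 1"
  shows "regluing_works (snd (last X)) (fst (hd Y)) (snd (last Z)) (fst (hd W))"
proof (cases "parity \<gamma> X = parity \<gamma> W")
  case False
  then have w: "weight \<gamma> (X @ W) + weight \<gamma> (Z @ Y) = weight \<gamma> S + weight \<gamma> T"
    using assms weights(1-4)
    by (cases "parity \<gamma> X"; cases "parity \<gamma> Y"; cases "parity \<gamma> Z"; cases "parity \<gamma> W") simp_all
  show ?thesis by (rule regluing_works_straight[of "X @ W" "X @ W"]) (use assms w in simp_all)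
next
  case True
  then have w: "weight \<gamma> (X @ reverse_trail Z) + weight \<gamma> (reverse_trail W @ Y) =
      weight \<gamma> S + weight \<gamma> T"
    using assms weights(1,2,5,6)
    by (cases "parity \<gamma> X"; cases "parity \<gamma> Y"; cases "parity \<gamma> Z"; cases "parity \<gamma> W") simp_all
  show ?thesis
    by (rule regluing_works_crossed[of _ _ "X @ reverse_trail Z" "X @ reverse_trail Z"])
      (use assms w in simp_all)
qed

lemma regluing_works_nonzero_zero:
  assumes "weight \<gamma> S = 1" "weight \<gamma> T = 0"
  shows "regluing_works (snd (last X)) (fst (hd Y)) (snd (last Z)) (fst (hd W))"
proof (cases "fst (g T) \<in> set Z")
  case inZ: True
  note rep = rep_prefix_T[OF assms(2) inZ]
  show ?thesis
  proof (cases "parity \<gamma> Z = parity \<gamma> Y")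
    case True
    then have "weight \<gamma> (Z @ Y) = 0" "weight \<gamma> (X @ W) + weight \<gamma> (Z @ Y) = weight \<gamma> S + weight \<gamma> T"
      using assms weights(1-4)
      by (cases "parity \<gamma> X"; cases "parity \<gamma> Y"; cases "parity \<gamma> Z"; cases "parity \<gamma> W"; simp)+
    then show ?thesis using rep[OF circuit_at_distinct[OF straight_circuits(2)]]
      by (intro regluing_works_straight[of "Z @ Y" "Z @ Y"]) (simp_all add: assms)
  next
    case False
    then have "weight \<gamma> (Z @ reverse_trail X) = 0"
      "weight \<gamma> (Z @ reverse_trail X) + weight \<gamma> (reverse_trail W @ Y) = weight \<gamma> S + weight \<gamma> T"
      using assms weights(1,2,6,7)
      by (cases "parity \<gamma> X"; cases "parity \<gamma> Y"; cases "parity \<gamma> Z"; cases "parity \<gamma> W"; simp)+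
    then show ?thesis using rep[OF circuit_at_distinct[OF crossed_circuits(3)]]
      by (intro regluing_works_crossed[of "Z @ reverse_trail X" "reverse_trail W @ Y"
            "Z @ reverse_trail X" "Z @ reverse_trail X"]) (simp_all add: assms)
  qed
next
  case notZ: False
  note rep = rep_suffix_T[OF assms(2) notZ]
  show ?thesis
  proof (cases "parity \<gamma> X = parity \<gamma> W")
    case True
    then have "weight \<gamma> (X @ W) = 0" "weight \<gamma> (X @ W) + weight \<gamma> (Z @ Y) = weight \<gamma> S + weight \<gamma> T"
      "parity \<gamma> X = parity \<gamma> Z"
      using assms weights(1-4)
      by (cases "parity \<gamma> X"; cases "parity \<gamma> Y"; cases "parity \<gamma> Z"; cases "parity \<gamma> W"; simp)+
    then show ?thesis using rep[OF circuit_at_distinct[OF straight_circuits(1)]]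
      by (intro regluing_works_straight[of "X @ W" "X @ W"]) (simp_all add: assms)
  next
    case False
    then have "weight \<gamma> (reverse_trail Y @ W) = 0"
      "weight \<gamma> (X @ reverse_trail Z) + weight \<gamma> (reverse_trail Y @ W) = weight \<gamma> S + weight \<gamma> T"
      "parity \<gamma> (reverse_trail Y) = parity \<gamma> Z"
      using assms weights(1,2,5,8)
      by (cases "parity \<gamma> X"; cases "parity \<gamma> Y"; cases "parity \<gamma> Z"; cases "parity \<gamma> W"; simp)+
    then show ?thesis using rep[OF circuit_at_distinct[OF crossed_circuits(4)]]
      by (intro regluing_works_crossed[of "X @ reverse_trail Z" "reverse_trail Y @ W"
            "reverse_trail Y @ W" "reverse_trail Y @ W"]) (simp_all add: assms)
  qed
qed

text \<open>If both circuits are zero, optimality forbids the two straight regluings from both being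
  non-zero; hence all four halves have the same parity and every regluing is zero.\<close>
lemma regluing_works_zero_zero:
  assumes "weight \<gamma> S = 0" "weight \<gamma> T = 0"
  shows "regluing_works (snd (last X)) (fst (hd Y)) (snd (last Z)) (fst (hd W))"
proof -
  have "weight \<gamma> (X @ W) + weight \<gamma> (Z @ Y) \<le> weight \<gamma> S + weight \<gamma> T"
    using weight_replace_two_le[OF S(1) T(1) distinct_circuits straight_circuits] pieces
      pieces_disjoint S(2) T(2)
    by auto
  then have zero: "weight \<gamma> (X @ W) = 0" "weight \<gamma> (Z @ Y) = 0"
    "weight \<gamma> (X @ reverse_trail Z) = 0" "weight \<gamma> (reverse_trail W @ Y) = 0"
    "weight \<gamma> (Z @ reverse_trail X) = 0" "weight \<gamma> (reverse_trail Y @ W) = 0"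
    and same: "parity \<gamma> Z = parity \<gamma> X" "parity \<gamma> (reverse_trail W) = parity \<gamma> X"
      "parity \<gamma> (reverse_trail Y) = parity \<gamma> Z"
    using assms weights
    by (cases "parity \<gamma> X"; cases "parity \<gamma> Y"; cases "parity \<gamma> Z"; cases "parity \<gamma> W"; simp)+
  note dist = circuit_at_distinct[OF straight_circuits(1)] circuit_at_distinct[OF straight_circuits(2)]
    circuit_at_distinct[OF crossed_circuits(1)] circuit_at_distinct[OF crossed_circuits(2)]
    circuit_at_distinct[OF crossed_circuits(3)] circuit_at_distinct[OF crossed_circuits(4)]
  consider "fst (g S) \<in> set X" "fst (g T) \<in> set Z" | "fst (g S) \<notin> set X" "fst (g T) \<notin> set Z"
    | "fst (g S) \<in> set X" "fst (g T) \<notin> set Z" | "fst (g S) \<notin> set X" "fst (g T) \<in> set Z"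
    by blast
  then show ?thesis
  proof cases
    case 1
    then show ?thesis using assms zero dist straight_distinct
        rep_prefix_S[OF assms(1)] rep_prefix_T[OF assms(2)]
      by (intro regluing_works_straight[of "X @ W" "Z @ Y"]) simp_all
  next
    case 2
    then show ?thesis using assms zero dist straight_distinct same
        rep_suffix_S[OF assms(1)] rep_suffix_T[OF assms(2)]
      by (intro regluing_works_straight[of "Z @ Y" "X @ W"]) auto
  next
    case 3
    then show ?thesis using assms zero dist crossed_distinct same
        rep_prefix_S[OF assms(1)] rep_suffix_T[OF assms(2)]
      by (intro regluing_works_crossed[of "X @ reverse_trail Z" "reverse_trail Y @ W"]) auto
  next
    case 4
    then show ?thesis using assms zero dist crossed_distinct same
        rep_suffix_S[OF assms(1)] rep_prefix_T[OF assms(2)]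
      by (intro regluing_works_crossed[of "Z @ reverse_trail X" "reverse_trail W @ Y"
            "reverse_trail W @ Y" "Z @ reverse_trail X"]) auto
  qed
qed

lemma regluing_works:
  assumes "weight \<gamma> T = 1 \<Longrightarrow> weight \<gamma> S = 1"
  shows "regluing_works (snd (last X)) (fst (hd Y)) (snd (last Z)) (fst (hd W))"
  using assms weight_cases[of \<gamma> S] weight_cases[of \<gamma> T] regluing_works_nonzero_nonzero
    regluing_works_nonzero_zero regluing_works_zero_zero
  by blast

end

context optimal_basis
begin

lemma regluing_works_at_common_vertex:
  assumes S: "S \<in> C" "S = X @ Y" "X \<noteq> []" "Y \<noteq> []"
    and T: "T \<in> C" "T = Z @ W" "Z \<noteq> []" "W \<noteq> []"
    and "S \<noteq> T" "vert (snd (last Z)) = vert (snd (last X))"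
  shows "regluing_works (snd (last X)) (fst (hd Y)) (snd (last Z)) (fst (hd W))"
proof (cases "weight \<gamma> T = 1 \<longrightarrow> weight \<gamma> S = 1")
  case True
  have "crossing H V vert mate b C \<gamma> g B S T X Y Z W"
    using assms by (intro crossing.intro optimal_basis_axioms crossing_axioms.intro) auto
  from crossing.regluing_works[OF this] show ?thesis using True by blast
next
  case False
  then have "weight \<gamma> S = 1 \<longrightarrow> weight \<gamma> T = 1" using weight_cases[of \<gamma> S] by auto
  moreover have "crossing H V vert mate b C \<gamma> g B T S Z W X Y"
    using assms by (intro crossing.intro optimal_basis_axioms crossing_axioms.intro) auto
  ultimately show ?thesis using crossing.regluing_works regluing_works_sym by metis
qed

end

section \<open>Splicing a closed trail into a circuit\<close>

context half_edge_graph
begin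

lemma rotate_closed_trail:
  assumes Q: "is_trail H vert mate (Q1 @ Q2)" "vert (snd (last (Q1 @ Q2))) = vert (fst (hd (Q1 @ Q2)))"
    and nonempty: "Q1 \<noteq> []"
  shows "is_trail H vert mate (Q2 @ Q1)" "vert (fst (hd (Q2 @ Q1))) = vert (snd (last Q1))"
    "vert (snd (last (Q2 @ Q1))) = vert (snd (last Q1))"
proof -
  show "is_trail H vert mate (Q2 @ Q1)"
  proof (cases "Q2 = []")
    case False
    then show ?thesis
      using is_trail_appendD[OF Q(1) nonempty False] is_trail_append[where A = Q2 and B = Q1]
        Q(2) nonempty
      by (simp add: Int_commute)
  qed (use Q in simp)
  show "vert (fst (hd (Q2 @ Q1))) = vert (snd (last Q1))"
    "vert (snd (last (Q2 @ Q1))) = vert (snd (last Q1))"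
    using Q nonempty is_trail_appendD(3)[OF Q(1) nonempty] by (cases "Q2 = []"; simp)+
qed

lemma splice_circuits:
  assumes S: "is_trail H vert mate (S1 @ S2)" "S1 \<noteq> []" "S2 \<noteq> []"
      "vert (fst (hd S1)) = b" "vert (snd (last S2)) = b"
    and Q: "is_trail H vert mate Q" "vert (fst (hd Q)) = vert (snd (last S1))"
      "vert (snd (last Q)) = vert (snd (last S1))"
    and disjoint: "trail_edges (S1 @ S2) \<inter> trail_edges Q = {}"
  shows "circuit_at H vert mate b (S1 @ Q @ S2)"
    "circuit_at H vert mate b (reverse_trail S2 @ Q @ reverse_trail S1)"
proof -
  note pieces = is_trail_appendD[OF S(1-3)]
  have QS2: "is_trail H vert mate (Q @ S2)"
    using is_trail_append[OF Q(1) pieces(2)] Q pieces disjoint by auto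
  show "circuit_at H vert mate b (S1 @ Q @ S2)"
    using circuit_at_append[OF pieces(1) QS2] is_trail_nonempty[OF Q(1)] S Q pieces disjoint
    by auto
  have QS1: "is_trail H vert mate (Q @ reverse_trail S1)"
    using is_trail_append[OF Q(1) is_trail_reverse_trail[OF pieces(1)]] Q S(2) disjoint
    by (auto simp: hd_reverse_trail)
  show "circuit_at H vert mate b (reverse_trail S2 @ Q @ reverse_trail S1)"
    using circuit_at_append[OF is_trail_reverse_trail[OF pieces(2)] QS1] is_trail_nonempty[OF Q(1)]
      S Q pieces disjoint
    by (auto simp: hd_reverse_trail last_reverse_trail)
qed

end

context optimal_basis
begin

text \<open>The two directions of traversal of an odd S give the prefix before the representative
  both parities, so one of the two splicings keeps the representative.\<close>
lemma splice_rep: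
  assumes T: "T \<in> C" "weight \<gamma> T = 0" "T = P @ Q @ R" and rep_in: "fst (g T) \<in> set Q"
    and Q: "Q = Q1 @ Q2" and odd: "parity \<gamma> (S1 @ S2)"
    and dist: "distinct (map arc_edge (S1 @ Q2 @ Q1 @ S2))"
      "distinct (map arc_edge (reverse_trail S2 @ Q2 @ Q1 @ reverse_trail S1))"
  shows "is_rep \<gamma> (S1 @ Q2 @ Q1 @ S2) (g T) \<or>
    is_rep \<gamma> (reverse_trail S2 @ Q2 @ Q1 @ reverse_trail S1) (g T)"
proof -
  have dist_T: "distinct (map arc_edge T)" using is_trail_distinct[OF trail[OF T(1)]] .
  have rep_T: "is_rep \<gamma> T (g T)" using reps T by blast
  have S12: "parity \<gamma> S1 \<noteq> parity \<gamma> S2" using odd by (simp add: parity_append)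
  show ?thesis
  proof (cases "fst (g T) \<in> set Q1")
    case True
    then show ?thesis
      using is_rep_transfer[of \<gamma> P Q1 "Q2 @ R" "g T" "S1 @ Q2" S2]
        is_rep_transfer[of \<gamma> P Q1 "Q2 @ R" "g T" "reverse_trail S2 @ Q2" "reverse_trail S1"]
        rep_T dist dist_T S12 T(3) Q
      by (auto simp: parity_append)
  next
    case False
    then have "fst (g T) \<in> set Q2" using rep_in Q by auto
    then show ?thesis
      using is_rep_transfer[of \<gamma> "P @ Q1" Q2 R "g T" S1 "Q1 @ S2"]
        is_rep_transfer[of \<gamma> "P @ Q1" Q2 R "g T" "reverse_trail S2" "Q1 @ reverse_trail S1"]
        rep_T dist dist_T S12 T(3) Q
      by (auto simp: parity_append)
  qed
qed

lemma splice:
  assumes T: "T \<in> C" "weight \<gamma> T = 0" "T = P @ Q @ R" and rep_in: "fst (g T) \<in> set Q"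
    and S: "is_trail H vert mate (S1 @ S2)" "S1 \<noteq> []" "S2 \<noteq> []"
      "vert (fst (hd S1)) = b" "vert (snd (last S2)) = b"
    and disjoint: "trail_edges (S1 @ S2) \<inter> trail_edges Q = {}"
    and Q: "is_trail H vert mate Q" "vert (snd (last Q)) = vert (fst (hd Q))"
      "Q = Q1 @ Q2" "Q1 \<noteq> []" "vert (snd (last Q1)) = vert (snd (last S1))"
  obtains N where "circuit_at H vert mate b N"
    "trail_edges N = trail_edges (S1 @ S2) \<union> trail_edges Q"
    "parity \<gamma> N \<longleftrightarrow> parity \<gamma> (S1 @ S2) \<noteq> parity \<gamma> Q"
    "trail_transitions S1 \<subseteq> trail_transitions N" "trail_transitions S2 \<subseteq> trail_transitions N"
    "parity \<gamma> (S1 @ S2) \<Longrightarrow> is_rep \<gamma> N (g T)"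
proof -
  have rotated: "is_trail H vert mate (Q2 @ Q1)" "vert (fst (hd (Q2 @ Q1))) = vert (snd (last S1))"
    "vert (snd (last (Q2 @ Q1))) = vert (snd (last S1))"
    using rotate_closed_trail[of Q1 Q2] Q by auto
  define N1 where "N1 = S1 @ (Q2 @ Q1) @ S2"
  define N2 where "N2 = reverse_trail S2 @ (Q2 @ Q1) @ reverse_trail S1"
  have circuits: "circuit_at H vert mate b N1" "circuit_at H vert mate b N2"
    unfolding N1_def N2_def
    by (rule splice_circuits[OF S rotated]; use disjoint Q(3) in auto)+
  have edges: "trail_edges N1 = trail_edges (S1 @ S2) \<union> trail_edges Q"
    "trail_edges N2 = trail_edges (S1 @ S2) \<union> trail_edges Q"
    using Q(3) by (auto simp: N1_def N2_def)
  have parities: "parity \<gamma> N1 \<longleftrightarrow> parity \<gamma> (S1 @ S2) \<noteq> parity \<gamma> Q"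
    "parity \<gamma> N2 \<longleftrightarrow> parity \<gamma> (S1 @ S2) \<noteq> parity \<gamma> Q"
    using Q(3) by (auto simp: N1_def N2_def parity_append)
  have transitions: "trail_transitions S1 \<subseteq> trail_transitions N1"
    "trail_transitions S2 \<subseteq> trail_transitions N1"
    "trail_transitions S1 \<subseteq> trail_transitions N2" "trail_transitions S2 \<subseteq> trail_transitions N2"
    using trail_transitions_append_right[of S1] trail_transitions_append_left[of S2 "S1 @ Q2 @ Q1"]
      trail_transitions_append_left[of "reverse_trail S1" "reverse_trail S2 @ Q2 @ Q1"]
      trail_transitions_append_right[of "reverse_trail S2"]
    by (auto simp: N1_def N2_def)
  have rep: "is_rep \<gamma> N1 (g T) \<or> is_rep \<gamma> N2 (g T)" if "parity \<gamma> (S1 @ S2)"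
    using splice_rep[OF T rep_in Q(3) that] circuits[THEN circuit_at_distinct]
    by (simp add: N1_def N2_def)
  show ?thesis
  proof (cases "parity \<gamma> (S1 @ S2)")
    case True
    then show ?thesis using rep that circuits edges parities transitions by blast
  next
    case False
    then show ?thesis using that circuits edges parities transitions by blast
  qed
qed

end

section \<open>Transitions on the same circuit\<close>

context half_edge_graph
begin

lemma circuit_half_edge_visit:
  assumes T: "circuit_at H vert mate b T" and j: "j < length T" "x = fst (T ! j) \<or> x = snd (T ! j)"
    and "vert x \<noteq> b"
  obtains k where "Suc k < length T" "vert x = vert (snd (T ! k))"
    "x = snd (T ! k) \<or> x = fst (T ! Suc k)"
proof -
  obtain k where k: "Suc k < length T" "x = snd (T ! k) \<or> x = fst (T ! Suc k)"
    using circuit_half_edge_cases[OF T j] assms(4) by blast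
  moreover have "vert (snd (T ! k)) = vert (fst (T ! Suc k))"
    using is_trail_consecutive[of H vert mate T k] T k(1) by (simp add: circuit_at_def)
  ultimately show ?thesis using that by metis
qed

end

locale closed_subtrail = flooded_graph H V vert mate b C
  for H :: "'h set" and V :: "'v set" and vert mate b C +
  fixes T P Q R :: "'h arc list"
  assumes T: "T \<in> C" "T = P @ Q @ R" "P \<noteq> []" "Q \<noteq> []" "R \<noteq> []"
    and closed: "vert (snd (last P)) = vert (snd (last Q))"
    and base_even: "even (deg H vert b)"
begin

abbreviation loop_vertices :: "'v set" where
  "loop_vertices \<equiv> vert ` snd ` set Q"

abbreviation loop_half_edges :: "'h set" where
  "loop_half_edges \<equiv> \<Union> (arc_edge ` set Q)"

definition loop_revisited :: bool where
  "loop_revisited \<longleftrightarrow>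
     (\<exists>T'\<in>C. T' \<noteq> T \<and> (\<exists>k. Suc k < length T' \<and> vert (snd (T' ! k)) \<in> loop_vertices)) \<or>
     (\<exists>k. Suc k < length (P @ R) \<and> k \<noteq> length P - 1 \<and> vert (snd ((P @ R) ! k)) \<in> loop_vertices)"

lemma pieces:
  "is_trail H vert mate P" "is_trail H vert mate Q" "is_trail H vert mate R"
  "vert (snd (last P)) = vert (fst (hd Q))" "vert (snd (last Q)) = vert (fst (hd R))"
  "trail_edges P \<inter> trail_edges Q = {}" "trail_edges P \<inter> trail_edges R = {}"
  "trail_edges Q \<inter> trail_edges R = {}"
proof -
  have "is_trail H vert mate (P @ (Q @ R))" using trail T by simp
  note PQR = is_trail_appendD[OF this T(3)] and QR = is_trail_appendD[of H vert mate Q R]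
  show "is_trail H vert mate P" "is_trail H vert mate Q" "is_trail H vert mate R"
    "vert (snd (last P)) = vert (fst (hd Q))" "vert (snd (last Q)) = vert (fst (hd R))"
    "trail_edges P \<inter> trail_edges Q = {}" "trail_edges P \<inter> trail_edges R = {}"
    "trail_edges Q \<inter> trail_edges R = {}"
    using PQR QR T by auto
qed

lemma loop_closed: "vert (snd (last Q)) = vert (fst (hd Q))"
  using closed pieces(4) by simp

lemma outer_circuit: "circuit_at H vert mate b (P @ R)"
  using circuit_at_append[OF pieces(1,3)] fst_hd_at_base[OF T(1)] snd_last_at_base[OF T(1)]
    closed pieces(5,7) T
  by simp

lemma loop_vertices_not_base: "loop_vertices \<subseteq> V - {b}"
proof
  fix y assume "y \<in> loop_vertices"
  then obtain m where m: "m < length Q" "y = vert (snd (Q ! m))"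
    by (auto simp: in_set_conv_nth)
  have "T ! (length P + m) = Q ! m" using T m by (simp add: nth_append)
  moreover have "Suc (length P + m) < length T" using T m by (cases R) auto
  ultimately have "y \<noteq> b" using inner_vertex_not_base[OF base_even T(1)] m by metis
  moreover have "y \<in> V" using m arc_half_edges_in[OF T(1), of "Q ! m"] vert_in T(2) by simp
  ultimately show "y \<in> V - {b}" by simp
qed

lemma loop_half_edge:
  assumes "z \<in> loop_half_edges"
  shows "vert z \<in> loop_vertices" "mate z \<in> loop_half_edges"
proof -
  obtain m where m: "m < length Q" "z \<in> arc_edge (Q ! m)"
    using assms by (auto simp: in_set_conv_nth)
  have "arc_edge (Q ! m) = {z, mate z}"
    using arc_edge_eq_mate is_trail_arc[OF pieces(2)] m by simp
  then show "mate z \<in> loop_half_edges" using m by (intro UN_I[of "Q ! m"]) auto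
  show "vert z \<in> loop_vertices"
  proof (cases "z = snd (Q ! m)")
    case False
    then have z: "z = fst (Q ! m)" using m(2) by (simp add: arc_edge_def)
    show ?thesis
    proof (cases m)
      case 0
      then have "vert z = vert (snd (last Q))" using z loop_closed T(4) by (simp add: hd_conv_nth)
      moreover have "last Q \<in> set Q" using T(4) by simp
      ultimately show ?thesis by blast
    next
      case (Suc k)
      then have "vert z = vert (snd (Q ! k))" using is_trail_consecutive[OF pieces(2)] m z by simp
      moreover have "Q ! k \<in> set Q" using Suc m(1) by simp
      ultimately show ?thesis by blast
    qed
  qed (use m in auto)
qed

lemma half_edge_at_loop_vertex:
  assumes "\<not> loop_revisited" and x: "x \<in> H" "vert x \<in> loop_vertices"
  shows "x \<in> loop_half_edges \<or> x = snd (last P) \<or> x = fst (hd R)"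
proof -
  have no_other: "vert (snd (T' ! k)) \<notin> loop_vertices"
    if "T' \<in> C" "T' \<noteq> T" "Suc k < length T'" for T' k
    using assms(1) that unfolding loop_revisited_def by blast
  have no_outer: "vert (snd ((P @ R) ! k)) \<notin> loop_vertices"
    if "Suc k < length (P @ R)" "k \<noteq> length P - 1" for k
    using assms(1) that unfolding loop_revisited_def by blast
  have not_base: "vert x \<noteq> b" using loop_vertices_not_base x(2) by blast
  obtain T' i where T': "T' \<in> C" "i < length T'" "x = fst (T' ! i) \<or> x = snd (T' ! i)"
    using half_edge_covered x(1) by blast
  show ?thesis
  proof (cases "T' = T")
    case False
    obtain k where "Suc k < length T'" "vert x = vert (snd (T' ! k))"
      using circuit_half_edge_visit[OF circuit[OF T'(1)] T'(2,3) not_base] by blast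
    then show ?thesis using no_other[OF T'(1) False] x(2) by simp
  next
    case True
    show ?thesis
    proof (cases "T' ! i \<in> set Q")
      case True
      then show ?thesis using T'(3) by (auto simp: arc_edge_def)
    next
      case False
      have "T' ! i \<in> set T" using T'(2) \<open>T' = T\<close> by simp
      then have "T' ! i \<in> set (P @ R)" using False T(2) by auto
      then obtain j where j: "j < length (P @ R)" "(P @ R) ! j = T' ! i"
        by (metis in_set_conv_nth)
      have "x = fst ((P @ R) ! j) \<or> x = snd ((P @ R) ! j)" using T'(3) j(2) by simp
      then obtain k where k: "Suc k < length (P @ R)" "vert x = vert (snd ((P @ R) ! k))"
        "x = snd ((P @ R) ! k) \<or> x = fst ((P @ R) ! Suc k)"
        using circuit_half_edge_visit[OF outer_circuit j(1) _ not_base] by blast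
      have "k = length P - 1" using no_outer[OF k(1)] k(2) x(2) by auto
      then have "(P @ R) ! k = last P" "(P @ R) ! Suc k = hd R"
        using T(3,5) by (auto simp: nth_append last_conv_nth hd_conv_nth)
      then show ?thesis using k(3) by auto
    qed
  qed
qed

lemma exit_edges:
  "snd (last P) \<in> H" "fst (hd R) \<in> H"
  "{snd (last P), mate (snd (last P))} \<in> trail_edges P"
  "{fst (hd R), mate (fst (hd R))} \<in> trail_edges R"
proof -
  have arcs: "is_arc H mate (last P)" "is_arc H mate (hd R)"
    using is_trail_arc[OF pieces(1) last_in_set[OF T(3)]] is_trail_arc[OF pieces(3) hd_in_set[OF T(5)]]
    by auto
  show "snd (last P) \<in> H" "fst (hd R) \<in> H"
    using arcs arc_snd_in by (auto simp: is_arc_def)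
  show "{snd (last P), mate (snd (last P))} \<in> trail_edges P"
    "{fst (hd R), mate (fst (hd R))} \<in> trail_edges R"
    using arc_edge_eq_mate[OF arcs(1) in_arc_edge_snd] arc_edge_eq_mate[OF arcs(2) in_arc_edge_fst]
      T(3,5) by (auto simp: trail_edges_def)
qed

lemma loop_edge_of_mate:
  assumes "x \<in> H" "mate x \<in> loop_half_edges"
  shows "{x, mate x} \<in> trail_edges Q"
proof -
  obtain a where a: "a \<in> set Q" "mate x \<in> arc_edge a" using assms(2) by blast
  then have "arc_edge a = {mate x, x}"
    using arc_edge_eq_mate[OF is_trail_arc[OF pieces(2) a(1)] a(2)] assms(1) by simp
  then show ?thesis using a(1) by (auto simp: trail_edges_def insert_commute)
qed

lemma cut_loop_vertices:
  assumes "\<not> loop_revisited"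
  shows "cut H vert mate loop_vertices =
    {{snd (last P), mate (snd (last P))}, {fst (hd R), mate (fst (hd R))}}"
    "{snd (last P), mate (snd (last P))} \<noteq> {fst (hd R), mate (fst (hd R))}"
proof -
  define p r where "p = snd (last P)" and "r = fst (hd R)"
  note exits = exit_edges[folded p_def r_def]
  show distinct: "{p, mate p} \<noteq> {r, mate r}"
    using exits pieces(7) by auto
  have outside: "vert (mate y) \<notin> loop_vertices" if "y \<in> {p, r}" for y
  proof
    assume "vert (mate y) \<in> loop_vertices"
    moreover have "mate y \<in> H" "mate (mate y) = y" using that exits mate_in by auto
    ultimately have "mate y \<in> loop_half_edges \<or> mate y = p \<or> mate y = r"
      using half_edge_at_loop_vertex[OF assms] p_def r_def by blast
    moreover have "{y, mate y} \<notin> trail_edges Q" using that exits pieces(6,8) by blast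
    ultimately show False
      using that exits distinct mate_neq loop_edge_of_mate
      by (auto simp: insert_commute)
  qed
  have "vert p = vert (snd (last Q))" "vert r = vert (snd (last Q))"
    using closed pieces(5) by (simp_all add: p_def r_def)
  moreover have "vert (snd (last Q)) \<in> loop_vertices" using T(4) by simp
  ultimately have "vert p \<in> loop_vertices" "vert r \<in> loop_vertices" by simp_all
  then have "{{p, mate p}, {r, mate r}} \<subseteq> cut H vert mate loop_vertices"
    using outside exits unfolding cut_def by blast
  moreover have "cut H vert mate loop_vertices \<subseteq> {{p, mate p}, {r, mate r}}"
  proof
    fix e assume "e \<in> cut H vert mate loop_vertices"
    then obtain x where x: "e = {x, mate x}" "x \<in> H" "vert x \<in> loop_vertices"
      "vert (mate x) \<notin> loop_vertices"
      unfolding cut_def by blast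
    then have "x \<notin> loop_half_edges" using loop_half_edge by blast
    then have "x = p \<or> x = r" using half_edge_at_loop_vertex[OF assms x(2,3)] p_def r_def by blast
    then show "e \<in> {{p, mate p}, {r, mate r}}" using x(1) by blast
  qed
  ultimately show "cut H vert mate loop_vertices = {{p, mate p}, {r, mate r}}" by blast
qed

text \<open>Otherwise the two edges at which T enters and leaves Q would separate the loop vertices
  from the base.\<close>
lemma four_edge_connected_loop_revisited:
  assumes "four_edge_connected H V vert mate b"
  shows loop_revisited
  using assms cut_loop_vertices loop_vertices_not_base
  unfolding four_edge_connected_def by (metis card_2_iff)

end

lemma split_after:
  assumes "Suc i < length T"
  shows "T = take (Suc i) T @ drop (Suc i) T" "take (Suc i) T \<noteq> []" "drop (Suc i) T \<noteq> []"
    "last (take (Suc i) T) = T ! i" "hd (drop (Suc i) T) = T ! Suc i"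
proof -
  show "T = take (Suc i) T @ drop (Suc i) T" by simp
qed (use assms in \<open>auto simp: take_Suc_conv_app_nth hd_drop_conv_nth\<close>)

locale revisit = optimal_basis H V vert mate b C \<gamma> g B + closed_subtrail H V vert mate b C T P Q R
  for H :: "'h set" and V :: "'v set" and vert mate b C \<gamma> g B T P Q R
begin

lemma loop_split:
  assumes "u \<in> loop_vertices"
  obtains Q1 Q2 where "Q = Q1 @ Q2" "Q1 \<noteq> []" "vert (snd (last Q1)) = u"
proof -
  obtain m where m: "m < length Q" "u = vert (snd (Q ! m))"
    using assms by (auto simp: in_set_conv_nth)
  have "Q = take (Suc m) Q @ drop (Suc m) Q" by simp
  moreover have "take (Suc m) Q \<noteq> []" "last (take (Suc m) Q) = Q ! m"
    using m by (auto simp: take_Suc_conv_app_nth)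
  ultimately show ?thesis using that m(2) by metis
qed

lemma reversed_loop:
  defines "N \<equiv> P @ reverse_trail Q @ R"
  shows "circuit_at H vert mate b N" "circuit_at H vert mate b (reverse_trail N)"
    "trail_edges N = trail_edges T" "weight \<gamma> N = weight \<gamma> T"
    "weight \<gamma> (reverse_trail N) = weight \<gamma> T"
    "{snd (last P), snd (last Q)} \<in> trail_transitions N"
    "{fst (hd Q), fst (hd R)} \<in> trail_transitions N"
proof -
  have QR: "is_trail H vert mate (reverse_trail Q @ R)"
    using is_trail_append[OF is_trail_reverse_trail[OF pieces(2)] pieces(3)] pieces(5,8)
      closed pieces(4) T(4)
    by (simp add: last_reverse_trail)
  have "vert (fst (hd P)) = b" "vert (snd (last (reverse_trail Q @ R))) = b"
    using fst_hd_at_base[OF T(1)] snd_last_at_base[OF T(1)] T by simp_all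
  moreover have "vert (snd (last P)) = vert (fst (hd (reverse_trail Q @ R)))"
    using closed T(4) by (simp add: hd_reverse_trail)
  moreover have "trail_edges P \<inter> trail_edges (reverse_trail Q @ R) = {}"
    using pieces(6,7) by auto
  ultimately show N_circuit: "circuit_at H vert mate b N"
    unfolding N_def by (rule circuit_at_append[OF pieces(1) QR])
  then show "circuit_at H vert mate b (reverse_trail N)" by (rule circuit_at_reverse_trail)
  show "trail_edges N = trail_edges T" using T(2) by (auto simp: N_def)
  have "parity \<gamma> N = parity \<gamma> T" using T(2) by (simp add: N_def parity_def)
  then show "weight \<gamma> N = weight \<gamma> T" "weight \<gamma> (reverse_trail N) = weight \<gamma> T"
    using weight_circuit[OF N_circuit] weight_circuit[OF circuit_at_reverse_trail[OF N_circuit]]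
      weight_circuit[OF circuit[OF T(1)]]
    by simp_all
  show "{snd (last P), snd (last Q)} \<in> trail_transitions N"
    using trail_transitions_append_junction[OF T(3), of "reverse_trail Q @ R"] T(4)
    by (simp add: N_def hd_reverse_trail)
  have "{fst (hd Q), fst (hd R)} \<in> trail_transitions (reverse_trail Q @ R)"
    using trail_transitions_append_junction[of "reverse_trail Q" R] T(4,5)
    by (simp add: last_reverse_trail)
  then show "{fst (hd Q), fst (hd R)} \<in> trail_transitions N"
    using trail_transitions_append_left[of "reverse_trail Q @ R" P] by (auto simp: N_def)
qed

text \<open>If the representative of T lies on Q, the prefix before it in reverse_trail R @ Q @
  reverse_trail P has the right parity exactly when Q is even.\<close>
lemma reversed_loop_rep:
  assumes zero: "weight \<gamma> T = 0" and even: "fst (g T) \<in> set Q \<Longrightarrow> \<not> parity \<gamma> Q"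
  shows "is_rep \<gamma> (P @ reverse_trail Q @ R) (g T) \<or>
    is_rep \<gamma> (reverse_trail R @ Q @ reverse_trail P) (g T)"
proof -
  have "circuit_at H vert mate b (reverse_trail R @ Q @ reverse_trail P)"
    using reversed_loop(2) by simp
  note dist = is_trail_distinct[OF trail[OF T(1)], unfolded T(2)]
    circuit_at_distinct[OF reversed_loop(1)] circuit_at_distinct[OF this]
  have rep_T: "is_rep \<gamma> (P @ Q @ R) (g T)" using reps T zero by auto
  consider "fst (g T) \<in> set P" | "fst (g T) \<in> set Q" | "fst (g T) \<in> set R"
    using rep_mem[OF T(1) zero] T(2) by auto
  then show ?thesis
  proof cases
    case 1
    show ?thesis
      using is_rep_transfer[of \<gamma> "[]" P "Q @ R" "g T" "[]" "reverse_trail Q @ R",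
          unfolded append_Nil, OF rep_T 1 dist(1,2) refl]
      by simp
  next
    case 2
    have "\<not> parity \<gamma> (P @ Q @ R)"
      using zero weight_circuit[OF circuit[OF T(1)]] T(2) by (simp split: if_splits)
    then have "parity \<gamma> (reverse_trail R) = parity \<gamma> P"
      using even[OF 2] unfolding parity_def gamma_count_append gamma_count_reverse_trail
      by presburger
    then show ?thesis
      using is_rep_transfer[of \<gamma> P Q R "g T" "reverse_trail R" "reverse_trail P",
          OF rep_T 2 dist(1,3)]
      by simp
  next
    case 3
    have "parity \<gamma> (P @ reverse_trail Q) = parity \<gamma> (P @ Q)" by (simp add: parity_def)
    then show ?thesis
      using is_rep_transfer[of \<gamma> "P @ Q" R "[]" "g T" "P @ reverse_trail Q" "[]",
          unfolded append_assoc append_Nil2, OF rep_T 3 dist(1,2)]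
      by simp
  qed
qed

lemma revisit_works_by_reversal:
  assumes "weight \<gamma> T = 0 \<Longrightarrow> fst (g T) \<in> set Q \<Longrightarrow> \<not> parity \<gamma> Q"
  shows "\<exists>C'. basis_flooding C' \<and> {snd (last P), snd (last Q)} \<in> flooding_transitions C'
    \<and> {fst (hd Q), fst (hd R)} \<in> flooding_transitions C'"
proof -
  define N1 N2 where "N1 = P @ reverse_trail Q @ R" and "N2 = reverse_trail R @ Q @ reverse_trail P"
  have N2_eq: "N2 = reverse_trail N1" by (simp add: N1_def N2_def)
  note N = reversed_loop[folded N1_def, folded N2_eq]
  have "trail_edges N2 = trail_edges T" "weight \<gamma> N2 = weight \<gamma> T"
    "{snd (last P), snd (last Q)} \<in> trail_transitions N2"
    "{fst (hd Q), fst (hd R)} \<in> trail_transitions N2"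
    using N(3,5,6,7) by (simp_all add: N2_eq)
  then have props: "circuit_at H vert mate b N' \<and> trail_edges N' = trail_edges T \<and>
      weight \<gamma> N' = weight \<gamma> T \<and> {snd (last P), snd (last Q)} \<in> trail_transitions N' \<and>
      {fst (hd Q), fst (hd R)} \<in> trail_transitions N'" if "N' \<in> {N1, N2}" for N'
    using that N by blast
  have via: "\<exists>C'. basis_flooding C' \<and> {snd (last P), snd (last Q)} \<in> flooding_transitions C'
    \<and> {fst (hd Q), fst (hd R)} \<in> flooding_transitions C'"
    if N': "N' \<in> {N1, N2}" "weight \<gamma> T = 0 \<longrightarrow> is_rep \<gamma> N' (g T)" for N'
  proof -
    have "basis_flooding ((C - {T}) \<union> {N'})"
      using props[OF N'(1)] N'(2) by (intro basis_flooding_replace_one[OF T(1)]) simp_all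
    then show ?thesis using props[OF N'(1)] by (blast intro: flooding_transitionsI)
  qed
  show ?thesis
  proof (cases "weight \<gamma> T = 0 \<longrightarrow> is_rep \<gamma> N1 (g T)")
    case True
    then show ?thesis using via[of N1] by simp
  next
    case False
    then show ?thesis using via[of N2] reversed_loop_rep assms by (simp add: N1_def N2_def)
  qed
qed

lemma outer_parity:
  assumes "weight \<gamma> T = 0" "parity \<gamma> Q"
  shows "parity \<gamma> (P @ R)"
proof -
  have "\<not> parity \<gamma> (P @ Q @ R)"
    using assms(1) weight_circuit[OF circuit[OF T(1)]] T(2) by (simp split: if_splits)
  then show ?thesis
    using assms(2) unfolding parity_def gamma_count_append by presburger
qed

text \<open>Splicing Q into another circuit T' leaves the odd circuit P @ R with its transition at
  the ends of Q; optimality forces T' to be odd, so the spliced circuit is zero and can take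
  over the representative of T.\<close>
lemma splice_into_other_circuit:
  assumes zero: "weight \<gamma> T = 0" and rep_in: "fst (g T) \<in> set Q" and odd: "parity \<gamma> Q"
    and T': "T' \<in> C" "T' \<noteq> T" "Suc k < length T'" "vert (snd (T' ! k)) \<in> loop_vertices"
  shows "\<exists>C'. basis_flooding C' \<and> {snd (last P), fst (hd R)} \<in> flooding_transitions C'"
proof -
  define S1 S2 where "S1 = take (Suc k) T'" and "S2 = drop (Suc k) T'"
  note split = split_after[OF T'(3), folded S1_def S2_def]
  obtain Q1 Q2 where Q: "Q = Q1 @ Q2" "Q1 \<noteq> []" "vert (snd (last Q1)) = vert (snd (last S1))"
    using loop_split[OF T'(4)] split(4) by metis
  have disjoint: "trail_edges (S1 @ S2) \<inter> trail_edges Q = {}"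
    using trail_edges_disjoint[OF T'(1) T(1) T'(2)] T(2) split(1) by auto
  have S: "is_trail H vert mate (S1 @ S2)" "vert (fst (hd S1)) = b" "vert (snd (last S2)) = b"
    using trail[OF T'(1)] fst_hd_at_base[OF T'(1)] snd_last_at_base[OF T'(1)] split(1-3)
    by (metis hd_append2 last_appendR)+
  obtain N where N: "circuit_at H vert mate b N"
    "trail_edges N = trail_edges (S1 @ S2) \<union> trail_edges Q"
    "parity \<gamma> N \<longleftrightarrow> parity \<gamma> (S1 @ S2) \<noteq> parity \<gamma> Q"
    "trail_transitions S1 \<subseteq> trail_transitions N" "trail_transitions S2 \<subseteq> trail_transitions N"
    "parity \<gamma> (S1 @ S2) \<Longrightarrow> is_rep \<gamma> N (g T)"
    by (rule splice[OF T(1) zero T(2) rep_in S(1) split(2,3) S(2,3) disjoint pieces(2) loop_closed Q])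
      blast
  have outer_weight: "weight \<gamma> (P @ R) = 1"
    using weight_circuit[OF outer_circuit] outer_parity[OF zero odd] by simp
  have edges: "trail_edges (P @ R) \<union> trail_edges N = trail_edges T \<union> trail_edges T'"
    "trail_edges (P @ R) \<inter> trail_edges N = {}"
    using N(2) T(2) split(1) trail_edges_disjoint[OF T'(1) T(1) T'(2)] pieces(6,8) disjoint
    by auto
  have weights: "weight \<gamma> T' = (if parity \<gamma> (S1 @ S2) then 1 else 0)"
    "weight \<gamma> N = (if parity \<gamma> (S1 @ S2) then 0 else 1)"
    using weight_circuit[OF circuit[OF T'(1)]] weight_circuit[OF N(1)] N(3) odd split(1)
    by simp_all
  note bound = weight_replace_two_le[OF T(1) T'(1) T'(2)[symmetric] outer_circuit N(1) edges]
  have odd_T': "parity \<gamma> (S1 @ S2)"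
    using bound outer_weight zero weights by (cases "parity \<gamma> (S1 @ S2)") simp_all
  have "basis_flooding ((C - {T, T'}) \<union> {P @ R, N})"
  proof (rule basis_flooding_replace_two[OF T(1) T'(1) T'(2)[symmetric] outer_circuit N(1) edges])
    show "N \<in> {P @ R, N}" "N \<in> {P @ R, N}" by simp_all
    show "weight \<gamma> N = 0 \<and> is_rep \<gamma> N (g T)" using weights(2) odd_T' N(6) by simp
    show "weight \<gamma> T' = 0 \<Longrightarrow> weight \<gamma> N = 0 \<and> is_rep \<gamma> N (g T')"
      "weight \<gamma> T' = 0 \<Longrightarrow> N \<noteq> N"
      using weights(1) odd_T' by simp_all
    show "weight \<gamma> (P @ R) + weight \<gamma> N = weight \<gamma> T + weight \<gamma> T'"
      using weights odd_T' outer_weight zero by simp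
  qed
  moreover have "{snd (last P), fst (hd R)} \<in> trail_transitions (P @ R)"
    using trail_transitions_append_junction T(3,5) by blast
  ultimately show ?thesis by (blast intro: flooding_transitionsI)
qed

text \<open>Splicing Q back into P @ R at another visit of a loop vertex keeps the transition between
  P and R.\<close>
lemma splice_into_outer:
  assumes zero: "weight \<gamma> T = 0" and rep_in: "fst (g T) \<in> set Q" and odd: "parity \<gamma> Q"
    and k: "Suc k < length (P @ R)" "k \<noteq> length P - 1"
      "vert (snd ((P @ R) ! k)) \<in> loop_vertices"
  shows "\<exists>C'. basis_flooding C' \<and> {snd (last P), fst (hd R)} \<in> flooding_transitions C'"
proof -
  define S1 S2 where "S1 = take (Suc k) (P @ R)" and "S2 = drop (Suc k) (P @ R)"
  note split = split_after[OF k(1), folded S1_def S2_def]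
  obtain Q1 Q2 where Q: "Q = Q1 @ Q2" "Q1 \<noteq> []" "vert (snd (last Q1)) = vert (snd (last S1))"
    using loop_split[OF k(3)] split(4) by metis
  have outer_edges: "trail_edges (S1 @ S2) = trail_edges P \<union> trail_edges R"
    using split(1) by (metis trail_edges_append)
  then have disjoint: "trail_edges (S1 @ S2) \<inter> trail_edges Q = {}"
    using pieces(6,8) by auto
  have S: "is_trail H vert mate (S1 @ S2)" "vert (fst (hd S1)) = b" "vert (snd (last S2)) = b"
    using outer_circuit split(1-3) unfolding circuit_at_def by (metis hd_append2 last_appendR)+
  obtain N where N: "circuit_at H vert mate b N"
    "trail_edges N = trail_edges (S1 @ S2) \<union> trail_edges Q"
    "parity \<gamma> N \<longleftrightarrow> parity \<gamma> (S1 @ S2) \<noteq> parity \<gamma> Q"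
    "trail_transitions S1 \<subseteq> trail_transitions N" "trail_transitions S2 \<subseteq> trail_transitions N"
    "parity \<gamma> (S1 @ S2) \<Longrightarrow> is_rep \<gamma> N (g T)"
    by (rule splice[OF T(1) zero T(2) rep_in S(1) split(2,3) S(2,3) disjoint pieces(2) loop_closed Q])
      blast
  have outer: "parity \<gamma> (S1 @ S2)" using outer_parity[OF zero odd] split(1) by simp
  have "\<not> parity \<gamma> N" using N(3) outer odd by simp
  then have weight: "weight \<gamma> N = weight \<gamma> T" using weight_circuit[OF N(1)] zero by simp
  have edges: "trail_edges N = trail_edges T" using N(2) outer_edges T(2) by auto
  have "basis_flooding ((C - {T}) \<union> {N})"
    using basis_flooding_replace_one[OF T(1) N(1) edges weight] N(6)[OF outer] by blast
  moreover have "{snd (last P), fst (hd R)} \<in> trail_transitions N"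
  proof (cases "k < length P - 1")
    case True
    then have "S2 = drop (Suc k) P @ R" "drop (Suc k) P \<noteq> []" "last (drop (Suc k) P) = last P"
      by (simp_all add: S2_def)
    then have "{snd (last P), fst (hd R)} \<in> trail_transitions S2"
      using trail_transitions_append_junction[of "drop (Suc k) P" R] T(5) by simp
    then show ?thesis using N(5) by blast
  next
    case False
    then have "length P \<le> k" using k(2) by simp
    then have "S1 = P @ take (Suc k - length P) R" "take (Suc k - length P) R \<noteq> []"
      "hd (take (Suc k - length P) R) = hd R"
      using T(5) by (simp_all add: S1_def hd_take)
    then have "{snd (last P), fst (hd R)} \<in> trail_transitions S1"
      using trail_transitions_append_junction[of P "take (Suc k - length P) R"] T(3) by simp
    then show ?thesis using N(4) by blast
  qed
  ultimately show ?thesis by (blast intro: flooding_transitionsI)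
qed

lemma revisit_works:
  assumes "four_edge_connected H V vert mate b"
  shows "\<exists>C'. basis_flooding C' \<and> ({snd (last P), fst (hd R)} \<in> flooding_transitions C' \<or>
    {snd (last P), snd (last Q)} \<in> flooding_transitions C' \<and>
    {fst (hd Q), fst (hd R)} \<in> flooding_transitions C')"
proof (cases "weight \<gamma> T = 0 \<and> fst (g T) \<in> set Q \<and> parity \<gamma> Q")
  case False
  then show ?thesis using revisit_works_by_reversal by blast
next
  case True
  then have zero: "weight \<gamma> T = 0" and rep_in: "fst (g T) \<in> set Q" and odd: "parity \<gamma> Q"
    by simp_all
  have loop_revisited using four_edge_connected_loop_revisited[OF assms] .
  then consider T' k where "T' \<in> C" "T' \<noteq> T" "Suc k < length T'"
      "vert (snd (T' ! k)) \<in> loop_vertices"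
    | k where "Suc k < length (P @ R)" "k \<noteq> length P - 1"
      "vert (snd ((P @ R) ! k)) \<in> loop_vertices"
    unfolding loop_revisited_def by blast
  then show ?thesis
  proof cases
    case 1
    then show ?thesis using splice_into_other_circuit[OF zero rep_in odd] by blast
  next
    case 2
    then show ?thesis using splice_into_outer[OF zero rep_in odd] by blast
  qed
qed

end

lemma split_twice:
  assumes "i1 < i2" "Suc i2 < length T"
  shows "T = take (Suc i1) T @ take (i2 - i1) (drop (Suc i1) T) @ drop (Suc i2) T"
    "take (Suc i1) T \<noteq> []" "take (i2 - i1) (drop (Suc i1) T) \<noteq> []" "drop (Suc i2) T \<noteq> []"
    "last (take (Suc i1) T) = T ! i1" "hd (take (i2 - i1) (drop (Suc i1) T)) = T ! Suc i1"
    "last (take (i2 - i1) (drop (Suc i1) T)) = T ! i2" "hd (drop (Suc i2) T) = T ! Suc i2"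
proof -
  have "drop (i2 - i1) (drop (Suc i1) T) = drop (Suc i2) T" using assms by (simp add: add.commute)
  then show "T = take (Suc i1) T @ take (i2 - i1) (drop (Suc i1) T) @ drop (Suc i2) T"
    by (metis append_take_drop_id)
  show "take (Suc i1) T \<noteq> []" "take (i2 - i1) (drop (Suc i1) T) \<noteq> []" "drop (Suc i2) T \<noteq> []"
    using assms by auto
  show "last (take (Suc i1) T) = T ! i1" using assms by (simp add: take_Suc_conv_app_nth)
  show "hd (take (i2 - i1) (drop (Suc i1) T)) = T ! Suc i1" "hd (drop (Suc i2) T) = T ! Suc i2"
    using assms by (simp_all add: hd_drop_conv_nth)
  have "take (i2 - i1) (drop (Suc i1) T) \<noteq> []" using assms by auto
  then have "last (take (i2 - i1) (drop (Suc i1) T)) = take (i2 - i1) (drop (Suc i1) T) ! (i2 - i1 - 1)"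
    using assms by (simp add: last_conv_nth)
  also have "\<dots> = T ! i2" using assms by simp
  finally show "last (take (i2 - i1) (drop (Suc i1) T)) = T ! i2" .
qed

section \<open>Counting transitions that work\<close>

text \<open>The involution p pairs up the elements of S other than h and h'; since each pair meets G
  and h' lies in G, G contains more than half of S - {h}.\<close>
lemma card_gt_half_if_involution_meets:
  assumes fin: "finite S" and h: "h \<in> S" "h' \<in> S" "h' \<noteq> h"
    and G: "G \<subseteq> S - {h}" "h' \<in> G"
    and p: "\<And>x. x \<in> S - {h, h'} \<Longrightarrow> p x \<in> S - {h, h'}"
      "\<And>x. x \<in> S - {h, h'} \<Longrightarrow> p (p x) = x"
      "\<And>x. x \<in> S - {h, h'} \<Longrightarrow> x \<in> G \<or> p x \<in> G"
  shows "card S - 1 < 2 * card G"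
proof -
  define S0 where "S0 = S - {h, h'}"
  have fin0: "finite S0" using fin by (simp add: S0_def)
  have "inj_on p (S0 - G)"
  proof (rule inj_onI)
    fix x y assume "x \<in> S0 - G" "y \<in> S0 - G" "p x = p y"
    then show "x = y" using p(2) unfolding S0_def by (metis DiffD1)
  qed
  then have "card (S0 - G) = card (p ` (S0 - G))" by (simp add: card_image)
  also have "\<dots> \<le> card (S0 \<inter> G)"
    using p fin0 unfolding S0_def by (intro card_mono) auto
  finally have less: "card (S0 - G) \<le> card (S0 \<inter> G)" .
  have "card S0 = card (S0 - G) + card (S0 \<inter> G)"
    using fin0 by (subst card_Un_disjoint[symmetric]) (auto intro: arg_cong[where f = card])
  moreover have "card G = Suc (card (S0 \<inter> G))"
  proof -
    have "G = insert h' (S0 \<inter> G)" "h' \<notin> S0 \<inter> G" using G by (auto simp: S0_def)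
    then show ?thesis using fin0 by (metis card_insert_disjoint finite_Int)
  qed
  moreover have "card S0 = card S - 2" using h fin by (simp add: S0_def card_Diff_subset)
  moreover have "card S \<ge> 2"
    using h fin card_mono[of S "{h, h'}"] by simp
  ultimately show ?thesis using less by linarith
qed

lemma transitions_at_with_eq_image:
  assumes "h \<in> H" "vert h = v"
  shows "transitions_at_with H vert v h = (\<lambda>y. {h, y}) ` ({y \<in> H. vert y = v} - {h})"
proof
  show "transitions_at_with H vert v h \<subseteq> (\<lambda>y. {h, y}) ` ({y \<in> H. vert y = v} - {h})"
    unfolding transitions_at_with_def by (auto simp: doubleton_eq_iff)
  show "(\<lambda>y. {h, y}) ` ({y \<in> H. vert y = v} - {h}) \<subseteq> transitions_at_with H vert v h"
    using assms unfolding transitions_at_with_def by blast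
qed

lemma card_transitions_at_with:
  assumes "finite H" "h \<in> H" "vert h = v"
  shows "card (transitions_at_with H vert v h) = card {y \<in> H. vert y = v} - 1"
    "card {R \<in> transitions_at_with H vert v h. P R} =
      card {y \<in> {y \<in> H. vert y = v} - {h}. P {h, y}}"
proof -
  have inj: "inj_on (\<lambda>y. {h, y}) ({y \<in> H. vert y = v} - {h})"
    by (rule inj_onI) (auto simp: doubleton_eq_iff)
  note transitions = transitions_at_with_eq_image[of h H vert v, OF assms(2,3)]
  show "card (transitions_at_with H vert v h) = card {y \<in> H. vert y = v} - 1"
    using inj assms unfolding transitions by (simp add: card_image)
  have image: "{R \<in> transitions_at_with H vert v h. P R} =
      (\<lambda>y. {h, y}) ` {y \<in> {y \<in> H. vert y = v} - {h}. P {h, y}}"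
    unfolding transitions by auto
  have "{y \<in> {y \<in> H. vert y = v} - {h}. P {h, y}} \<subseteq> {y \<in> H. vert y = v} - {h}" by blast
  then show "card {R \<in> transitions_at_with H vert v h. P R} =
      card {y \<in> {y \<in> H. vert y = v} - {h}. P {h, y}}"
    unfolding image by (rule card_image[OF inj_on_subset[OF inj]])
qed

context flooded_graph
begin

text \<open>Only meaningful for half-edges away from the base, which lie in exactly one transition.\<close>
definition partner :: "'h \<Rightarrow> 'h" where
  "partner x = (SOME y. y \<noteq> x \<and>
     (\<exists>T i. T \<in> C \<and> Suc i < length T \<and> {x, y} = {snd (T ! i), fst (T ! Suc i)}))"

lemma partner_transition:
  assumes "x \<in> H" "vert x \<noteq> b"
  obtains T i where "T \<in> C" "Suc i < length T" "{x, partner x} = {snd (T ! i), fst (T ! Suc i)}"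
    "partner x \<noteq> x"
proof -
  obtain T i where T: "T \<in> C" "Suc i < length T" "x = snd (T ! i) \<or> x = fst (T ! Suc i)"
    using half_edge_in_transition[OF assms] by blast
  define y where "y = (if x = snd (T ! i) then fst (T ! Suc i) else snd (T ! i))"
  have "y \<noteq> x \<and> {x, y} = {snd (T ! i), fst (T ! Suc i)}"
    using T(3) inner_transition(3)[OF T(1,2)] by (auto simp: y_def)
  then have "\<exists>y. y \<noteq> x \<and> (\<exists>T i. T \<in> C \<and> Suc i < length T \<and> {x, y} = {snd (T ! i), fst (T ! Suc i)})"
    using T(1,2) by blast
  from someI_ex[OF this] show ?thesis using that unfolding partner_def by blast
qed

lemma partner_in_transition:
  assumes "T \<in> C" "Suc i < length T" "{x, partner x} = {snd (T ! i), fst (T ! Suc i)}"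
  shows "x = snd (T ! i) \<or> x = fst (T ! Suc i)" "partner x = snd (T ! i) \<or> partner x = fst (T ! Suc i)"
    "partner x \<in> H" "vert (partner x) = vert x"
  using assms inner_transition[OF assms(1,2)] by (auto simp: doubleton_eq_iff)

lemma partner_partner:
  assumes "x \<in> H" "vert x \<noteq> b"
  shows "partner (partner x) = x"
proof -
  obtain T i where T: "T \<in> C" "Suc i < length T" "{x, partner x} = {snd (T ! i), fst (T ! Suc i)}"
    "partner x \<noteq> x"
    using partner_transition[OF assms] .
  note x = partner_in_transition[OF T(1-3)]
  obtain T' j where T': "T' \<in> C" "Suc j < length T'"
    "{partner x, partner (partner x)} = {snd (T' ! j), fst (T' ! Suc j)}"
    "partner (partner x) \<noteq> partner x"
    using partner_transition[of "partner x"] x(3,4) assms(2) by metis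
  have "T = T' \<and> i = j"
    using transition_unique[OF T(1,2) T'(1,2) x(2)] partner_in_transition(1)[OF T'(1-3)] by blast
  then show ?thesis using T(3) T'(3,4) by (auto simp: doubleton_eq_iff)
qed

lemma partner_at_same_vertex:
  assumes "x \<in> H" "vert x \<noteq> b"
  shows "partner x \<in> H" "vert (partner x) = vert x"
proof -
  obtain T i where "T \<in> C" "Suc i < length T" "{x, partner x} = {snd (T ! i), fst (T ! Suc i)}"
    "partner x \<noteq> x"
    by (rule partner_transition[OF assms])
  then show "partner x \<in> H" "vert (partner x) = vert x" using partner_in_transition(3,4) by auto
qed

lemma partner_not_in_pair:
  assumes "x \<in> H" "vert x \<noteq> b" "h \<in> H" "vert h \<noteq> b" "x \<notin> {h, partner h}"
  shows "partner x \<notin> {h, partner h}"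
  using partner_partner[OF assms(1,2)] partner_partner[OF assms(3,4)] assms(5) by auto

lemma partner_transition_in_flooding:
  assumes "h \<in> H" "vert h \<noteq> b"
  shows "{h, partner h} \<in> flooding_transitions C"
proof -
  obtain T i where "T \<in> C" "Suc i < length T" "{h, partner h} = {snd (T ! i), fst (T ! Suc i)}"
    "partner h \<noteq> h"
    by (rule partner_transition[OF assms])
  then show ?thesis unfolding flooding_transitions_def trail_transitions_def by auto
qed

text \<open>A half-edge whose edge goes to the base lies on the first or the last arc of its
  circuit, since circuits of a flooding do not pass through the base.\<close>
lemma base_neighbour_position:
  assumes even: "even (deg H vert b)" and T: "T \<in> C" "Suc i < length T"
    and h: "h = snd (T ! i) \<or> h = fst (T ! Suc i)" "vert (mate h) = b"
  shows "h = snd (T ! i) \<and> i = 0 \<or> h = fst (T ! Suc i) \<and> Suc (Suc i) = length T"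
proof -
  have arc: "is_arc H mate (T ! k)" if "k < length T" for k
    using is_arc_in[OF T(1)] that by simp
  from h(1) show ?thesis
  proof
    assume h1: "h = snd (T ! i)"
    have "i = 0"
    proof (rule ccontr)
      assume "i \<noteq> 0"
      then obtain k where k: "i = Suc k" by (cases i) auto
      have "fst (T ! i) = mate h" using arc[of i] T(2) h1 by (auto simp: is_arc_def)
      then show False
        using is_trail_consecutive[OF trail[OF T(1)], of k] inner_vertex_not_base[OF even T(1), of k]
          k T(2) h(2)
        by simp
    qed
    then show ?thesis using h1 by simp
  next
    assume h2: "h = fst (T ! Suc i)"
    have "Suc (Suc i) = length T"
    proof (rule ccontr)
      assume "Suc (Suc i) \<noteq> length T"
      then have "Suc (Suc i) < length T" using T(2) by simp
      moreover have "snd (T ! Suc i) = mate h" using arc[of "Suc i"] T(2) h2 by (auto simp: is_arc_def)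
      ultimately show False using inner_vertex_not_base[OF even T(1), of "Suc i"] h(2) by simp
    qed
    then show ?thesis using h2 by simp
  qed
qed

end

context optimal_basis
begin

lemma works_at_other_circuit:
  assumes T0: "T0 \<in> C" "Suc i0 < length T0" and T: "T \<in> C" "Suc i < length T" "T \<noteq> T0"
    and same_vertex: "vert (snd (T ! i)) = vert (snd (T0 ! i0))"
    and y: "y = snd (T0 ! i0) \<or> y = fst (T0 ! Suc i0)"
  shows "\<exists>z\<in>{snd (T ! i), fst (T ! Suc i)}. works_for H vert mate \<gamma> b {y, z} B"
proof -
  note s0 = split_after[OF T0(2)] and s = split_after[OF T(2)]
  have "regluing_works (snd (T0 ! i0)) (fst (T0 ! Suc i0)) (snd (T ! i)) (fst (T ! Suc i))"
    using regluing_works_at_common_vertex[OF T0(1) s0(1-3) T(1) s(1-3)] T(3) same_vertex s0 s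
    by fastforce
  then show ?thesis using y unfolding regluing_works_def
    by (auto dest: works_forI simp: insert_commute)
qed

lemma works_at_same_circuit:
  assumes even: "even (deg H vert b)" and fec: "four_edge_connected H V vert mate b"
    and T: "T \<in> C" "Suc i0 < length T" "Suc i < length T" "i \<noteq> i0"
    and same_vertex: "vert (snd (T ! i)) = vert (snd (T ! i0))"
    and h: "h = snd (T ! i0) \<and> i0 = 0 \<or> h = fst (T ! Suc i0) \<and> Suc (Suc i0) = length T"
  shows "\<exists>z\<in>{snd (T ! i), fst (T ! Suc i)}. works_for H vert mate \<gamma> b {h, z} B"
proof -
  have revisit: "revisit H V vert mate b C \<gamma> g B T P Q R"
    if "T = P @ Q @ R" "P \<noteq> []" "Q \<noteq> []" "R \<noteq> []" "vert (snd (last P)) = vert (snd (last Q))"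
    for P Q R
    using that T(1) even
    by (intro revisit.intro optimal_basis_axioms closed_subtrail.intro closed_subtrail_axioms.intro
        flooded_graph_axioms) auto
  from h show ?thesis
  proof
    assume h: "h = snd (T ! i0) \<and> i0 = 0"
    then have "i0 < i" using T(4) by simp
    note s = split_twice[OF this T(3)]
    from revisit.revisit_works[OF revisit[OF s(1-4)] fec] s(5-8) same_vertex
    show ?thesis using h by (auto dest: works_forI)
  next
    assume h: "h = fst (T ! Suc i0) \<and> Suc (Suc i0) = length T"
    then have "i < i0" using T(3,4) by simp
    note s = split_twice[OF this T(2)]
    from revisit.revisit_works[OF revisit[OF s(1-4)] fec] s(5-8) same_vertex
    show ?thesis using h by (auto dest: works_forI simp: insert_commute)
  qed
qed

lemma works_for_transition_or_partner:
  assumes even: "even (deg H vert b)" and fec: "four_edge_connected H V vert mate b"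
    and h: "h \<in> H" "vert h = v" "v \<noteq> b" "vert (mate h) = b"
    and x: "x \<in> H" "vert x = v" "x \<notin> {h, partner h}"
  shows "works_for H vert mate \<gamma> b {h, x} B \<or> works_for H vert mate \<gamma> b {h, partner x} B"
proof -
  obtain T0 i0 where T0: "T0 \<in> C" "Suc i0 < length T0"
    "{h, partner h} = {snd (T0 ! i0), fst (T0 ! Suc i0)}"
    using partner_transition[of h] h by metis
  obtain T i where T: "T \<in> C" "Suc i < length T" "{x, partner x} = {snd (T ! i), fst (T ! Suc i)}"
    using partner_transition[of x] x h(3) by metis
  note h0 = partner_in_transition(1)[OF T0] and x0 = partner_in_transition(1)[OF T]
  have pair: "{snd (T ! i), fst (T ! Suc i)} = {x, partner x}" using T(3) by simp
  have same_vertex: "vert (snd (T ! i)) = vert (snd (T0 ! i0))"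
    using inner_transition(4)[OF T(1,2)] inner_transition(4)[OF T0(1,2)] x0 h0 x(2) h(2) by auto
  have distinct: "T \<noteq> T0 \<or> i \<noteq> i0" using T(3) T0(3) x(3) by auto
  show ?thesis
  proof (cases "T = T0")
    case False
    then show ?thesis using works_at_other_circuit[OF T0(1,2) T(1,2) False same_vertex h0] pair
      by auto
  next
    case True
    then show ?thesis
      using works_at_same_circuit[OF even fec T0(1,2) T(2)[unfolded True] _ _
          base_neighbour_position[OF even T0(1,2) h0 h(4)]] distinct same_vertex pair
      by auto
  qed
qed

lemma card_works_for_transitions:
  assumes even: "even (deg H vert b)" and fec: "four_edge_connected H V vert mate b"
    and h: "h \<in> H" "vert h = v" "v \<noteq> b" "vert (mate h) = b"
  shows "card (transitions_at_with H vert v h)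
    < 2 * card {R \<in> transitions_at_with H vert v h. works_for H vert mate \<gamma> b R B}"
proof -
  define S where "S = {y \<in> H. vert y = v}"
  define G where "G = {y \<in> S - {h}. works_for H vert mate \<gamma> b {h, y} B}"
  have partner_S: "partner x \<in> S" if "x \<in> S" for x
    using partner_at_same_vertex[of x] that h(3) by (auto simp: S_def)
  have "partner h \<noteq> h" using partner_transition[of h] h by metis
  moreover have "partner h \<in> G"
    using works_forI[OF basis_flooding_self partner_transition_in_flooding] partner_S[of h] h
      \<open>partner h \<noteq> h\<close>
    by (auto simp: S_def G_def)
  moreover have involution: "partner x \<in> S - {h, partner h}" "partner (partner x) = x"
    if "x \<in> S - {h, partner h}" for x
    using that partner_S partner_not_in_pair[of x h] partner_partner[of x] h by (auto simp: S_def)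
  moreover have "x \<in> G \<or> partner x \<in> G" if "x \<in> S - {h, partner h}" for x
    using works_for_transition_or_partner[OF even fec h, of x] that involution[OF that]
    by (auto simp: S_def G_def)
  ultimately have "card S - 1 < 2 * card G"
    using finite_half_edges h partner_S[of h]
    by (intro card_gt_half_if_involution_meets[of S h "partner h" G partner])
      (auto simp: S_def G_def)
  then show ?thesis
    using card_transitions_at_with[of H h vert v, OF finite_half_edges h(1,2)]
    by (simp add: S_def G_def)
qed

end

theorem mainTheorem5:
  fixes H :: "'h set" and V :: "'v set" and vert :: "'h \<Rightarrow> 'v" and mate :: "'h \<Rightarrow> 'h"
    and \<gamma> :: "'h set \<Rightarrow> bool" and b v :: 'v and h :: 'h
    and B :: "('h arc \<times> nat) set"
  assumes "res_graph H V vert mate b"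
    and "four_edge_connected H V vert mate b"
    and "v \<noteq> b"
    and "h \<in> H" and "vert h = v" and "vert (mate h) = b"
    and "flooding_basis H vert mate \<gamma> b B"
  shows "2 * card {R \<in> transitions_at_with H vert v h. works_for H vert mate \<gamma> b R B}
           > card (transitions_at_with H vert v h)"
proof -
  obtain C g where optimal: "optimal_flooding H vert mate \<gamma> b C"
    and reps: "\<forall>T\<in>C. weight \<gamma> T = 0 \<longrightarrow> is_rep \<gamma> T (g T)" "inj_on g {T \<in> C. weight \<gamma> T = 0}"
      "B = g ` {T \<in> C. weight \<gamma> T = 0}"
    using assms(7) unfolding flooding_basis_def sys_reps_def by blast
  have graph: "is_graph H V vert mate" and even: "even (deg H vert b)"
    using assms(1) by (auto simp: res_graph_def eulerian_def)
  interpret optimal_basis H V vert mate b C \<gamma> g B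
    using graph optimal reps
    by (intro optimal_basis.intro flooded_graph.intro half_edge_graph.intro flooded_graph_axioms.intro
        optimal_basis_axioms.intro) (simp_all add: optimal_flooding_def)
  show ?thesis using card_works_for_transitions[OF even assms(2,4,5,3,6)] by simp
qed

end
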